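(* Let $m\geq 0$, let $g\in\mathbb{Z}[x_1,\dots,x_n]^{\Sigma_n}$ be a symmetric polynomial and let $0\leq r\leq n$. Then $$C_{m+1}(g\,s(1^r))=C_{m+1}\bigl(C_m(g)\,s(1^r)\bigr).$$
   Context: For a partition $\lambda$ with at most $n$ parts, $s(\lambda)$ denotes the Schur polynomial in $x_1,\dots,x_n$; these form a $\mathbb{Z}$-basis of the ring of symmetric polynomials. $1^r$ denotes the partition $(1,\dots,1)$ with $r$ parts. For an integer $m\geq0$, a partition $\lambda=(\lambda_1,\lambda_2,\dots)$ is $m$-adapted if $\lambda_i>m-i$ for every $i\geq1$ with $\lambda_i>0$. $C_m$ is the additive endomorphism of the ring of symmetric polynomials with $C_m(s(\lambda))=s(\lambda)$ if $\lambda$ is $m$-adapted and $C_m(s(\lambda))=0$ otherwise. *)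

theory Defs
  imports "HOL-Library.Poly_Mapping" "HOL-Combinatorics.Permutations"
begin

text \<open>Polynomials with integer coefficients in the variables x_0, x_1, ...
  (variable x_i of the paper is index i-1 here): a polynomial is a finitely
  supported map from exponent vectors (monomials) to coefficients.\<close>

type_synonym ipoly = "(nat \<Rightarrow>\<^sub>0 nat) \<Rightarrow>\<^sub>0 int"

definition symmetric_poly :: "nat \<Rightarrow> ipoly \<Rightarrow> bool" where
  "symmetric_poly n p \<longleftrightarrow>
     (\<forall>\<alpha>\<in>Poly_Mapping.keys p. Poly_Mapping.keys \<alpha> \<subseteq> {..<n}) \<and>
     (\<forall>\<sigma>. \<sigma> permutes {..<n} \<longrightarrow>
        (\<forall>\<alpha>. Poly_Mapping.lookup p (Poly_Mapping.map_key \<sigma> \<alpha>) = Poly_Mapping.lookup p \<alpha>))"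

definition partition :: "nat list \<Rightarrow> bool" where
  "partition la \<longleftrightarrow> sorted_wrt (\<ge>) la \<and> 0 \<notin> set la"

definition cells :: "nat list \<Rightarrow> (nat \<times> nat) set" where
  "cells la = {(i, j). i < length la \<and> j < la ! i}"

text \<open>Semistandard Young tableaux of shape lambda with entries in {0..<n}
  (entry k stands for the variable x_k); a tableau is a filling of the
  cells, extended by 0 outside the diagram.\<close>
definition ssyt :: "nat \<Rightarrow> nat list \<Rightarrow> (nat \<times> nat \<Rightarrow> nat) set" where
  "ssyt n la = {T.
     (\<forall>c\<in>cells la. T c < n) \<and>
     (\<forall>c. c \<notin> cells la \<longrightarrow> T c = 0) \<and>
     (\<forall>i j. (i, Suc j) \<in> cells la \<longrightarrow> T (i, j) \<le> T (i, Suc j)) \<and>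
     (\<forall>i j. (Suc i, j) \<in> cells la \<longrightarrow> T (i, j) < T (Suc i, j))}"

definition tableau_content :: "nat list \<Rightarrow> (nat \<times> nat \<Rightarrow> nat) \<Rightarrow> (nat \<Rightarrow>\<^sub>0 nat)" where
  "tableau_content la T = Abs_poly_mapping (\<lambda>k. card {c \<in> cells la. T c = k})"

definition schur :: "nat \<Rightarrow> nat list \<Rightarrow> ipoly" where
  "schur n la = (\<Sum>T\<in>ssyt n la. Poly_Mapping.single (tableau_content la T) 1)"

definition partitions_le :: "nat \<Rightarrow> nat list set" where
  "partitions_le n = {la. partition la \<and> length la \<le> n}"

definition schur_coeffs :: "nat \<Rightarrow> ipoly \<Rightarrow> nat list \<Rightarrow> int" where
  "schur_coeffs n g = (THE c. finite {la. c la \<noteq> 0} \<and>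
      (\<forall>la. c la \<noteq> 0 \<longrightarrow> la \<in> partitions_le n) \<and>
      g = (\<Sum>la\<in>{la. c la \<noteq> 0}. of_int (c la) * schur n la))"

text \<open>m-adapted partitions (paper indexes parts from 1: part i+1 is lambda!i).\<close>
definition adapted :: "nat \<Rightarrow> nat list \<Rightarrow> bool" where
  "adapted m la \<longleftrightarrow> (\<forall>i<length la. int (la ! i) > int m - int (i + 1))"

definition C_op :: "nat \<Rightarrow> nat \<Rightarrow> ipoly \<Rightarrow> ipoly" where
  "C_op n m g = (\<Sum>la\<in>{la. schur_coeffs n g la \<noteq> 0 \<and> adapted m la}.
                   of_int (schur_coeffs n g la) * schur n la)"

end

theory Submission
  imports Defs
begin

text \<open>Expand g in the Schur basis, g = \<Sum> c(\<lambda>) s(\<lambda>). By Pieri's rule every s(\<mu>) occurring in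
  s(\<lambda>) s(1^r) has \<mu>(i) \<le> \<lambda>(i) + 1 for all parts of \<lambda>; if such a \<mu> is (m+1)-adapted, then \<lambda> is
  m-adapted. So the (m+1)-adapted components of g s(1^r) only involve the m-adapted components of g.

  The Schur basis is handled through the bialternant formula a(\<delta>) s(\<lambda>) = a(\<lambda> + \<delta>), proved with
  Bender-Knuth involutions (symmetry of s(\<lambda>)) and a sign-reversing involution on tableaux. Since
  the monomial x^(\<mu> + \<delta>) occurs in a(\<lambda> + \<delta>) only for \<lambda> = \<mu>, Schur coefficients are unique;
  sorting the exponents in a(\<delta>) g gives the Schur expansion of a symmetric g, and the same
  computation for g = s(1^r), whose monomials are squarefree, gives Pieri's rule.\<close>

abbreviation lookup :: "('a \<Rightarrow>\<^sub>0 'b::zero) \<Rightarrow> 'a \<Rightarrow> 'b" where "lookup \<equiv> Poly_Mapping.lookup"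
abbreviation single :: "'a \<Rightarrow> 'b \<Rightarrow> ('a \<Rightarrow>\<^sub>0 'b::zero)" where "single \<equiv> Poly_Mapping.single"
abbreviation map_key :: "('a \<Rightarrow> 'b) \<Rightarrow> ('b \<Rightarrow>\<^sub>0 'c::zero) \<Rightarrow> ('a \<Rightarrow>\<^sub>0 'c)" where "map_key \<equiv> Poly_Mapping.map_key"
abbreviation keys :: "('a \<Rightarrow>\<^sub>0 'b::zero) \<Rightarrow> 'a set" where "keys \<equiv> Poly_Mapping.keys"

lemma cells_iff: "(i, j) \<in> cells la \<longleftrightarrow> i < length la \<and> j < la ! i"
  by (simp add: cells_def)

lemma finite_cells: "finite (cells la)"
proof -
  have "cells la \<subseteq> {..<length la} \<times> {..<Max (set la)}"
  proof
    fix c assume "c \<in> cells la"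
    then obtain i j where c: "c = (i, j)" "i < length la" "j < la ! i" by (auto simp: cells_def)
    then have m: "la ! i \<le> Max (set la)" by (intro Max_ge) auto
    have "j < Max (set la)" using c(3) m by linarith
    then show "c \<in> {..<length la} \<times> {..<Max (set la)}" using c by simp
  qed
  then show ?thesis by (rule finite_subset) auto
qed

lemma finite_cells_subset: "finite {c \<in> cells la. P c}"
  using finite_cells by simp

lemma cells_downward_closed:
  assumes "sorted_wrt (\<ge>) la" "(i, j) \<in> cells la" "i' \<le> i" "j' \<le> j"
  shows "(i', j') \<in> cells la"
proof -
  have "la ! i \<le> la ! i'"
    using assms by (cases "i' = i") (auto simp: cells_iff intro: sorted_wrt_nth_less[OF assms(1)])
  then show ?thesis using assms by (auto simp: cells_iff)
qed

lemma ssytD: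
  assumes "T \<in> ssyt n la"
  shows "\<And>c. c \<in> cells la \<Longrightarrow> T c < n"
    and "\<And>c. c \<notin> cells la \<Longrightarrow> T c = 0"
    and "\<And>i j. (i, Suc j) \<in> cells la \<Longrightarrow> T (i, j) \<le> T (i, Suc j)"
    and "\<And>i j. (Suc i, j) \<in> cells la \<Longrightarrow> T (i, j) < T (Suc i, j)"
  using assms by (auto simp: ssyt_def)

lemma ssyt_row_mono:
  assumes "T \<in> ssyt n la" "(i, j') \<in> cells la" "j \<le> j'"
  shows "T (i, j) \<le> T (i, j')"
  using assms(2,3)
proof (induction j' arbitrary: j)
  case 0 then show ?case by simp
next
  case (Suc j')
  show ?case
  proof (cases "j = Suc j'")
    case False
    then have "j \<le> j'" using Suc by simp
    have c: "(i, j') \<in> cells la" using Suc.prems by (auto simp: cells_iff)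
    have "T (i, j) \<le> T (i, j')" using Suc.IH[OF c \<open>j \<le> j'\<close>] .
    also have "\<dots> \<le> T (i, Suc j')" using ssytD(3)[OF assms(1) Suc.prems(1)] .
    finally show ?thesis .
  qed simp
qed

lemma ssyt_col_strict:
  assumes "T \<in> ssyt n la" "sorted_wrt (\<ge>) la" "(i', j) \<in> cells la" "i < i'"
  shows "T (i, j) < T (i', j)"
  using assms(3,4)
proof (induction i')
  case 0 then show ?case by simp
next
  case (Suc i')
  have c: "(i', j) \<in> cells la" using cells_downward_closed[OF assms(2) Suc.prems(1)] by simp
  have s: "T (i', j) < T (Suc i', j)" using ssytD(4)[OF assms(1) Suc.prems(1)] .
  show ?case
  proof (cases "i = i'")
    case False
    then have "i < i'" using Suc by simp
    with Suc.IH[OF c] s show ?thesis by simp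
  qed (use s in simp)
qed

lemma ssyt_row_index_le:
  assumes "T \<in> ssyt n la" "sorted_wrt (\<ge>) la" "(i, j) \<in> cells la"
  shows "i \<le> T (i, j)"
  using assms(3)
proof (induction i)
  case 0 then show ?case by simp
next
  case (Suc i)
  have c: "(i, j) \<in> cells la" using cells_downward_closed[OF assms(2) Suc.prems] by simp
  with Suc.IH ssytD(4)[OF assms(1) Suc.prems] show ?case by simp
qed

lemma finite_ssyt: "finite (ssyt n la)"
proof -
  have "ssyt n la \<subseteq> {f. \<forall>x. (x \<in> cells la \<longrightarrow> f x \<in> {..<n}) \<and> (x \<notin> cells la \<longrightarrow> f x = 0)}"
    by (auto simp: ssyt_def)
  then show ?thesis
    by (rule finite_subset) (intro finite_set_of_finite_funs finite_cells finite_lessThan)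
qed

definition entry_count :: "nat list \<Rightarrow> (nat \<times> nat \<Rightarrow> nat) \<Rightarrow> nat \<Rightarrow> nat" where
  "entry_count la T v = card {c \<in> cells la. T c = v}"

lemma lookup_tableau_content: "lookup (tableau_content la T) = entry_count la T"
proof -
  have "{v. entry_count la T v \<noteq> 0} \<subseteq> T ` cells la"
    by (auto simp: entry_count_def card_eq_0_iff)
  then have "finite {v. entry_count la T v \<noteq> 0}" using finite_cells finite_subset by blast
  then show ?thesis unfolding tableau_content_def entry_count_def[abs_def]
    by (simp add: Abs_poly_mapping_inverse entry_count_def)
qed

lemma lookup_schur: "lookup (schur n la) b = int (card {T \<in> ssyt n la. tableau_content la T = b})"
proof -
  have "lookup (schur n la) b = (\<Sum>T\<in>ssyt n la. if tableau_content la T = b then 1 else 0)"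
    unfolding schur_def lookup_sum by (auto simp: lookup_single when_def intro!: sum.cong)
  also have "\<dots> = int (card {T \<in> ssyt n la. tableau_content la T = b})"
    using finite_ssyt by (simp add: sum.If_cases Int_def)
  finally show ?thesis .
qed

lemma keys_schur: "keys (schur n la) = tableau_content la ` ssyt n la"
proof -
  have "b \<in> keys (schur n la) \<longleftrightarrow> {T \<in> ssyt n la. tableau_content la T = b} \<noteq> {}" for b
    using finite_ssyt by (simp add: in_keys_iff lookup_schur)
  then show ?thesis by auto
qed

lemma keys_schur_subset: "b \<in> keys (schur n la) \<Longrightarrow> keys b \<subseteq> {..<n}"
proof -
  assume "b \<in> keys (schur n la)"
  then have "card {T \<in> ssyt n la. tableau_content la T = b} \<noteq> 0"
    by (simp add: lookup_schur in_keys_iff)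
  then have "{T \<in> ssyt n la. tableau_content la T = b} \<noteq> {}" by (metis card.empty)
  then obtain T where T: "T \<in> ssyt n la" "tableau_content la T = b" by blast
  show ?thesis
  proof
    fix v assume "v \<in> keys b"
    then have "entry_count la T v \<noteq> 0" using T(2) lookup_tableau_content by (metis in_keys_iff)
    then obtain c where "c \<in> cells la" "T c = v" by (auto simp: entry_count_def card_eq_0_iff)
    then show "v \<in> {..<n}" using ssytD(1)[OF T(1), of c] by auto
  qed
qed

lemma partitions_le_sorted: "la \<in> partitions_le n \<Longrightarrow> sorted_wrt (\<ge>) la"
  by (simp add: partitions_le_def partition_def)

lemma partitions_le_length: "la \<in> partitions_le n \<Longrightarrow> length la \<le> n"
  by (simp add: partitions_le_def)

lemma partitions_le_partition: "la \<in> partitions_le n \<Longrightarrow> partition la"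
  by (simp add: partitions_le_def)

lemma partition_nth_pos: "partition la \<Longrightarrow> i < length la \<Longrightarrow> 0 < la ! i"
  unfolding partition_def by (metis gr0I nth_mem)

section \<open>Bender-Knuth involutions and the symmetry of Schur polynomials\<close>

lemma downward_closed_eq_lessThan:
  fixes S :: "nat set"
  assumes "finite S" "\<And>j j'. j \<le> j' \<Longrightarrow> j' \<in> S \<Longrightarrow> j \<in> S"
  shows "S = {..<card S}"
proof (cases "S = {}")
  case False
  have "S = {..Max S}"
  proof
    show "S \<subseteq> {..Max S}" using assms(1) by auto
    show "{..Max S} \<subseteq> S" using assms(2)[of _ "Max S"] Max_in[OF assms(1) False] by auto
  qed
  then show ?thesis by (metis card_atMost lessThan_Suc_atMost)
qed simp

text \<open>Classes of the cell (i, j) for the Bender-Knuth move exchanging the entries k and k+1: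
  0 and 5 are entries below k and above k+1; 1 is a k with a k+1 below it and 4 a k+1 with a k above
  it (these pairs stay fixed); 2 and 3 are the free k and k+1. The class is weakly increasing along
  each row, so the cells of a row with class below c form an initial segment, of length bk_count.\<close>

definition bk_class :: "nat list \<Rightarrow> nat \<Rightarrow> (nat \<times> nat \<Rightarrow> nat) \<Rightarrow> nat \<Rightarrow> nat \<Rightarrow> nat" where
  "bk_class la k T i j = (if T (i, j) < k then 0 else if T (i, j) = k then
      (if (Suc i, j) \<in> cells la \<and> T (Suc i, j) = Suc k then 1 else 2)
    else if T (i, j) = Suc k then (if 0 < i \<and> T (i - 1, j) = k then 4 else 3) else 5)"

definition bk_free :: "nat list \<Rightarrow> nat \<Rightarrow> (nat \<times> nat \<Rightarrow> nat) \<Rightarrow> nat \<times> nat \<Rightarrow> bool" where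
  "bk_free la k T c \<longleftrightarrow> c \<in> cells la \<and> bk_class la k T (fst c) (snd c) \<in> {2, 3}"

definition bk_count :: "nat list \<Rightarrow> nat \<Rightarrow> (nat \<times> nat \<Rightarrow> nat) \<Rightarrow> nat \<Rightarrow> nat \<Rightarrow> nat" where
  "bk_count la k T i c = card {j. j < la ! i \<and> bk_class la k T i j < c}"

text \<open>In each row the free cells form a block of a entries k followed by b entries k+1; the move
  replaces it by b entries k followed by a entries k+1.\<close>

definition bender_knuth :: "nat list \<Rightarrow> nat \<Rightarrow> (nat \<times> nat \<Rightarrow> nat) \<Rightarrow> nat \<times> nat \<Rightarrow> nat" where
  "bender_knuth la k T c = (if bk_free la k T c then
      (if snd c < bk_count la k T (fst c) 2 + (bk_count la k T (fst c) 4 - bk_count la k T (fst c) 3) then k else Suc k)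
    else T c)"

locale bk_tableau =
  fixes n :: nat and la :: "nat list" and k :: nat and T :: "nat \<times> nat \<Rightarrow> nat"
  assumes sorted: "sorted_wrt (\<ge>) la" and T: "T \<in> ssyt n la" and kn: "Suc k < n"
begin

abbreviation "cl \<equiv> bk_class la k T"
abbreviation "N \<equiv> bk_count la k T"

lemma bk_class_mono:
  assumes c: "(i, j') \<in> cells la" and jj: "j \<le> j'"
  shows "cl i j \<le> cl i j'"
proof -
  have cij: "(i, j) \<in> cells la" using cells_downward_closed[OF sorted c order.refl jj] .
  have r: "T (i, j) \<le> T (i, j')" using ssyt_row_mono[OF T c jj] .
  show ?thesis
  proof (cases "T (i, j) = T (i, j')")
    case False
    with r have "T (i, j) < T (i, j')" by simp
    then show ?thesis unfolding bk_class_def by auto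
  next
    case eq: True
    have k1: "cl i j \<le> cl i j'" if tk: "T (i, j) = k"
    proof -
      have "(Suc i, j) \<in> cells la \<and> T (Suc i, j) = Suc k"
        if h: "(Suc i, j') \<in> cells la" "T (Suc i, j') = Suc k"
      proof -
        have c2: "(Suc i, j) \<in> cells la" using cells_downward_closed[OF sorted h(1) order.refl jj] .
        have "T (Suc i, j) \<le> T (Suc i, j')" using ssyt_row_mono[OF T h(1) jj] .
        moreover have "T (i, j) < T (Suc i, j)" using ssytD(4)[OF T c2] .
        ultimately show ?thesis using h tk c2 by simp
      qed
      then show ?thesis using that eq unfolding bk_class_def by auto
    qed
    have k2: "cl i j \<le> cl i j'" if "T (i, j) = Suc k"
    proof -
      have "T (i - 1, j') = k" if h: "0 < i" "T (i - 1, j) = k"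
      proof -
        have c2: "(i - 1, j') \<in> cells la"
          using cells_downward_closed[OF sorted c _ order.refl, of "i - 1"] by simp
        have "T (i - 1, j) \<le> T (i - 1, j')" using ssyt_row_mono[OF T c2 jj] .
        moreover have "T (i - 1, j') < T (i, j')" using ssyt_col_strict[OF T sorted c, of "i - 1"] h by simp
        ultimately show ?thesis using h eq \<open>T (i, j) = Suc k\<close> by simp
      qed
      then show ?thesis using that eq unfolding bk_class_def by auto
    qed
    show ?thesis
      using k1 k2 eq unfolding bk_class_def by (cases "T (i, j) < k") auto
  qed
qed

lemma bk_class_le: "bk_class la' k' T' i j \<le> 5"
  by (simp add: bk_class_def)

lemma bk_class_less_iff:
  assumes "(i, j) \<in> cells la"
  shows "cl i j < c \<longleftrightarrow> j < N i c"
proof -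
  let ?S = "{j. j < la ! i \<and> cl i j < c}"
  have fin: "finite ?S" by simp
  have dc: "j \<in> ?S" if "j \<le> j'" "j' \<in> ?S" for j j'
  proof -
    have c': "(i, j') \<in> cells la" using that assms by (auto simp: cells_iff)
    show ?thesis using bk_class_mono[OF c' that(1)] that by auto
  qed
  have "?S = {..<card ?S}" by (rule downward_closed_eq_lessThan[OF fin dc])
  then have "j \<in> ?S \<longleftrightarrow> j < N i c" unfolding bk_count_def by (metis lessThan_iff)
  then show ?thesis using assms by (auto simp: cells_iff)
qed

lemma bk_count_le: "N i c \<le> la ! i"
proof -
  have "{j. j < la ! i \<and> cl i j < c} \<subseteq> {..<la ! i}" by auto
  from card_mono[OF finite_lessThan this] show ?thesis unfolding bk_count_def by simp
qed

lemma bk_count_mono: "c \<le> c' \<Longrightarrow> N i c \<le> N i c'"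
  unfolding bk_count_def by (intro card_mono) auto

lemma bk_free_iff: "bk_free la k T (i, j) \<longleftrightarrow> (i, j) \<in> cells la \<and> N i 2 \<le> j \<and> j < N i 4"
proof (cases "(i, j) \<in> cells la")
  case True
  have "cl i j \<in> {2, 3} \<longleftrightarrow> \<not> cl i j < 2 \<and> cl i j < 4" by auto
  then show ?thesis using True bk_class_less_iff[OF True, of 2] bk_class_less_iff[OF True, of 4]
    by (simp add: bk_free_def not_less)
qed (simp add: bk_free_def)

lemma bk_free_entry: "bk_free la k T c \<Longrightarrow> T c = k \<or> T c = Suc k"
  by (cases c) (auto simp: bk_free_def bk_class_def split: if_splits)

lemma bk_free_entry_eq_iff:
  assumes "bk_free la k T (i, j)"
  shows "T (i, j) = k \<longleftrightarrow> j < N i 3"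
proof -
  have c: "(i, j) \<in> cells la" using assms by (simp add: bk_free_def)
  have "T (i, j) = k \<longleftrightarrow> cl i j < 3"
    using assms by (auto simp: bk_free_def bk_class_def split: if_splits)
  then show ?thesis using bk_class_less_iff[OF c] by simp
qed

lemma bk_free_below:
  assumes "bk_free la k T (i, j)" "(Suc i, j) \<in> cells la"
  shows "Suc (Suc k) \<le> T (Suc i, j)"
proof -
  have lt: "T (i, j) < T (Suc i, j)" using ssytD(4)[OF T assms(2)] .
  show ?thesis using assms(1) lt assms(2) by (auto simp: bk_free_def bk_class_def split: if_splits)
qed

lemma bk_free_above:
  assumes "bk_free la k T (Suc i, j)"
  shows "T (i, j) < k"
proof -
  have c: "(Suc i, j) \<in> cells la" using assms by (simp add: bk_free_def)
  have lt: "T (i, j) < T (Suc i, j)" using ssytD(4)[OF T c] .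
  show ?thesis using assms lt by (auto simp: bk_free_def bk_class_def split: if_splits)
qed

abbreviation "B \<equiv> bender_knuth la k T"

lemma bender_knuth_not_free: "\<not> bk_free la k T c \<Longrightarrow> B c = T c"
  by (simp add: bender_knuth_def)

lemma bender_knuth_free_entry: "bk_free la k T c \<Longrightarrow> B c = k \<or> B c = Suc k"
  by (simp add: bender_knuth_def)

lemma bender_knuth_row_mono:
  assumes c: "(i, Suc j) \<in> cells la"
  shows "B (i, j) \<le> B (i, Suc j)"
proof -
  have c': "(i, j) \<in> cells la" using c by (auto simp: cells_iff)
  have m: "cl i j \<le> cl i (Suc j)" using bk_class_mono[OF c] by simp
  consider "bk_free la k T (i, j)" "bk_free la k T (i, Suc j)"
    | "bk_free la k T (i, j)" "\<not> bk_free la k T (i, Suc j)"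
    | "\<not> bk_free la k T (i, j)" "bk_free la k T (i, Suc j)"
    | "\<not> bk_free la k T (i, j)" "\<not> bk_free la k T (i, Suc j)"
    by blast
  then show ?thesis
  proof cases
    case 1 then show ?thesis by (auto simp: bender_knuth_def)
  next
    case 2
    then have "cl i (Suc j) \<in> {4, 5}"
      using m c c' bk_class_le[of la k T i "Suc j"] by (auto simp: bk_free_def)
    then have "Suc k \<le> T (i, Suc j)" by (auto simp: bk_class_def split: if_splits)
    then show ?thesis using 2 by (auto simp: bender_knuth_def)
  next
    case 3
    then have "cl i j \<in> {0, 1}" using m c c' by (auto simp: bk_free_def)
    then have "T (i, j) \<le> k" by (auto simp: bk_class_def split: if_splits)
    then show ?thesis using 3 by (auto simp: bender_knuth_def)
  qed (use ssytD(3)[OF T c] in \<open>simp add: bender_knuth_def\<close>)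
qed

lemma bender_knuth_col_strict:
  assumes c: "(Suc i, j) \<in> cells la"
  shows "B (i, j) < B (Suc i, j)"
proof (cases "bk_free la k T (i, j)")
  case True
  then have "Suc (Suc k) \<le> T (Suc i, j)" using bk_free_below c by blast
  moreover from this have "\<not> bk_free la k T (Suc i, j)" using bk_free_entry by fastforce
  ultimately show ?thesis using True bender_knuth_free_entry[of "(i, j)"] bender_knuth_not_free by fastforce
next
  case False
  show ?thesis
  proof (cases "bk_free la k T (Suc i, j)")
    case True
    then have "T (i, j) < k" using bk_free_above by blast
    then show ?thesis using True False bender_knuth_free_entry[of "(Suc i, j)"] bender_knuth_not_free
      by fastforce
  qed (use False ssytD(4)[OF T c] bender_knuth_not_free in simp)
qed

lemma bender_knuth_ssyt: "B \<in> ssyt n la"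
proof -
  have "B c < n" if "c \<in> cells la" for c
    using ssytD(1)[OF T that] kn bender_knuth_free_entry[of c] bender_knuth_not_free[of c]
    by (cases "bk_free la k T c") auto
  moreover have "B c = 0" if "c \<notin> cells la" for c
    using that ssytD(2)[OF T that] by (simp add: bender_knuth_def bk_free_def)
  ultimately show ?thesis using bender_knuth_row_mono bender_knuth_col_strict by (simp add: ssyt_def)
qed

lemma bk_class_bender_knuth_free:
  assumes free: "bk_free la k T (i, j)"
  shows "bk_class la k B i j = (if B (i, j) = k then 2 else 3)"
proof -
  have below: "\<not> ((Suc i, j) \<in> cells la \<and> B (Suc i, j) = Suc k)"
  proof
    assume h: "(Suc i, j) \<in> cells la \<and> B (Suc i, j) = Suc k"
    then have "Suc (Suc k) \<le> T (Suc i, j)" using bk_free_below free by blast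
    then have "\<not> bk_free la k T (Suc i, j)" using bk_free_entry by fastforce
    then show False using h bender_knuth_not_free \<open>Suc (Suc k) \<le> T (Suc i, j)\<close> by fastforce
  qed
  have above: "\<not> (0 < i \<and> B (i - 1, j) = k)"
  proof
    assume h: "0 < i \<and> B (i - 1, j) = k"
    then obtain i' where i': "i = Suc i'" by (cases i) auto
    then have "T (i', j) < k" using bk_free_above free by blast
    then have "\<not> bk_free la k T (i', j)" using bk_free_entry by fastforce
    then show False using h i' bender_knuth_not_free \<open>T (i', j) < k\<close> by fastforce
  qed
  show ?thesis using free bender_knuth_free_entry[OF free] below above unfolding bk_class_def by auto
qed

lemma bk_class_bender_knuth_not_free:
  assumes c: "(i, j) \<in> cells la" and not_free: "\<not> bk_free la k T (i, j)"
  shows "bk_class la k B i j = cl i j"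
proof -
  have Bij: "B (i, j) = T (i, j)" using not_free by (rule bender_knuth_not_free)
  have cls: "cl i j \<notin> {2, 3}" using not_free c by (simp add: bk_free_def)
  consider "T (i, j) < k" | "T (i, j) = k" | "T (i, j) = Suc k" | "Suc k < T (i, j)" by linarith
  then show ?thesis
  proof cases
    case 2
    then have h: "(Suc i, j) \<in> cells la" "T (Suc i, j) = Suc k"
      using cls by (auto simp: bk_class_def split: if_splits)
    have "cl (Suc i) j = 4" using h 2 unfolding bk_class_def by simp
    then have "\<not> bk_free la k T (Suc i, j)" by (simp add: bk_free_def)
    then have "B (Suc i, j) = Suc k" using h bender_knuth_not_free by simp
    then show ?thesis using not_free Bij 2 h unfolding bk_class_def by simp
  next
    case 3
    then have h: "0 < i" "T (i - 1, j) = k" using cls by (auto simp: bk_class_def split: if_splits)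
    have "cl (i - 1) j = 1" using h 3 c unfolding bk_class_def by simp
    then have "\<not> bk_free la k T (i - 1, j)" by (simp add: bk_free_def)
    then have "B (i - 1, j) = k" using h bender_knuth_not_free by simp
    then show ?thesis using not_free Bij 3 h unfolding bk_class_def by simp
  qed (use not_free Bij in \<open>auto simp: bk_class_def\<close>)
qed

lemma bk_class_bender_knuth:
  assumes "(i, j) \<in> cells la"
  shows "bk_class la k B i j = (if bk_free la k T (i, j) then (if B (i, j) = k then 2 else 3) else cl i j)"
  using bk_class_bender_knuth_free bk_class_bender_knuth_not_free[OF assms] by simp

lemma bk_free_bender_knuth: "bk_free la k B c \<longleftrightarrow> bk_free la k T c"
proof (cases "c \<in> cells la")
  case True
  obtain i j where c: "c = (i, j)" by (cases c)
  show ?thesis using bk_class_bender_knuth[of i j] True c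
    by (auto simp: bk_free_def simp del: One_nat_def)
qed (simp add: bk_free_def)


lemma bk_count_order: "N i 2 \<le> N i 3" "N i 3 \<le> N i 4"
  by (auto intro: bk_count_mono)

lemma bk_count_bender_knuth:
  assumes i: "i < length la"
  shows "bk_count la k B i 2 = N i 2" "bk_count la k B i 4 = N i 4"
    "bk_count la k B i 3 = N i 2 + (N i 4 - N i 3)"
proof -
  have cell: "(i, j) \<in> cells la" if "j < la ! i" for j using i that by (simp add: cells_iff)
  have e2: "bk_class la k B i j < 2 \<longleftrightarrow> cl i j < 2" if "j < la ! i" for j
    using bk_class_bender_knuth[OF cell[OF that]] cell[OF that] by (auto simp: bk_free_def)
  have e4: "bk_class la k B i j < 4 \<longleftrightarrow> cl i j < 4" if "j < la ! i" for j
    using bk_class_bender_knuth[OF cell[OF that]] cell[OF that] by (auto simp: bk_free_def)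
  show "bk_count la k B i 2 = N i 2" unfolding bk_count_def using e2 by (metis (no_types, lifting))
  show "bk_count la k B i 4 = N i 4" unfolding bk_count_def using e4 by (metis (no_types, lifting))
  let ?M = "N i 2 + (N i 4 - N i 3)"
  have M: "?M \<le> la ! i" using bk_count_order[of i] bk_count_le[of i 4] by linarith
  have e3: "j < la ! i \<and> bk_class la k B i j < 3 \<longleftrightarrow> j < ?M" for j
  proof (cases "j < la ! i")
    case True
    note c = cell[OF True]
    show ?thesis
    proof (cases "bk_free la k T (i, j)")
      case fr: True
      have "B (i, j) = k \<longleftrightarrow> j < ?M" using fr by (simp add: bender_knuth_def)
      then show ?thesis using bk_class_bender_knuth[OF c] fr True by simp
    next
      case nf: False
      have "cl i j \<noteq> 2" "cl i j \<noteq> 3" using nf c by (auto simp: bk_free_def)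
      then have "cl i j < 3 \<longleftrightarrow> cl i j < 2" by linarith
      moreover have "cl i j < 2 \<longleftrightarrow> j < N i 2" using bk_class_less_iff[OF c] .
      moreover have "\<not> (N i 2 \<le> j \<and> j < N i 4)" using nf c bk_free_iff by simp
      ultimately show ?thesis using bk_class_bender_knuth[OF c] nf True bk_count_order[of i] by auto
    qed
  next
    case False
    then show ?thesis using M by simp
  qed
  have "{j. j < la ! i \<and> bk_class la k B i j < 3} = {..<?M}" using e3 by auto
  then show "bk_count la k B i 3 = ?M" unfolding bk_count_def by simp
qed

lemma bender_knuth_involution: "bender_knuth la k B = T"
proof
  fix c :: "nat \<times> nat"
  obtain i j where c: "c = (i, j)" by (cases c)
  show "bender_knuth la k B c = T c"
  proof (cases "bk_free la k T c")
    case True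
    then have cc: "(i, j) \<in> cells la" using c by (simp add: bk_free_def)
    then have i: "i < length la" by (simp add: cells_iff)
    have fB: "bk_free la k B c" using True bk_free_bender_knuth by simp
    have "bender_knuth la k B c = (if j < N i 3 then k else Suc k)"
      using fB c bk_count_bender_knuth[OF i] bk_count_order[of i] by (simp add: bender_knuth_def)
    also have "\<dots> = T c" using bk_free_entry_eq_iff[of i j] True c bk_free_entry[OF True] by auto
    finally show ?thesis .
  next
    case False
    then have "\<not> bk_free la k B c" using bk_free_bender_knuth by simp
    then show ?thesis using False by (simp add: bender_knuth_def bender_knuth_not_free)
  qed
qed


lemma bij_betw_fixed_pairs:
  "bij_betw (\<lambda>(i, j). (Suc i, j)) {c \<in> cells la. \<not> bk_free la k T c \<and> T c = k}
    {c \<in> cells la. \<not> bk_free la k T c \<and> T c = Suc k}"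
  (is "bij_betw _ ?NF0 ?NF1")
proof (rule bij_betw_imageI)
  show "inj_on (\<lambda>(i, j). (Suc i, j)) ?NF0" by (auto simp: inj_on_def)
  show "(\<lambda>(i, j). (Suc i, j)) ` ?NF0 = ?NF1"
  proof
    show "(\<lambda>(i, j). (Suc i, j)) ` ?NF0 \<subseteq> ?NF1"
    proof
      fix x assume "x \<in> (\<lambda>(i, j). (Suc i, j)) ` ?NF0"
      then obtain i j where x: "x = (Suc i, j)" and
        h: "(i, j) \<in> cells la" "\<not> bk_free la k T (i, j)" "T (i, j) = k" by auto
      from h have "cl i j \<noteq> 2" by (simp add: bk_free_def)
      then have h2: "(Suc i, j) \<in> cells la" "T (Suc i, j) = Suc k"
        using h(3) by (auto simp: bk_class_def split: if_splits)
      then have "cl (Suc i) j = 4" using h(3) by (simp add: bk_class_def)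
      then show "x \<in> ?NF1"
        using h2 x by (simp add: bk_free_def)
    qed
    show "?NF1 \<subseteq> (\<lambda>(i, j). (Suc i, j)) ` ?NF0"
    proof
      fix x assume "x \<in> ?NF1"
      then obtain i j where x: "x = (i, j)" and
        h: "(i, j) \<in> cells la" "\<not> bk_free la k T (i, j)" "T (i, j) = Suc k" by (cases x) auto
      from h have "cl i j \<noteq> 3" by (simp add: bk_free_def)
      then have h2: "0 < i" "T (i - 1, j) = k" using h(3) by (auto simp: bk_class_def split: if_splits)
      then obtain i' where i': "i = Suc i'" by (cases i) auto
      have c': "(i', j) \<in> cells la" using cells_downward_closed[OF sorted h(1), of i' j] i' by simp
      have "cl i' j = 1" using h h2 i' by (simp add: bk_class_def)
      then have "(i', j) \<in> ?NF0" using c' h2 i' by (simp add: bk_free_def)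
      then show "x \<in> (\<lambda>(i, j). (Suc i, j)) ` ?NF0" using i' x by force
    qed
  qed
qed

lemma bij_betw_free_blocks:
  "bij_betw (\<lambda>(i, j). (i, j + (N i 3 - N i 2)))
    {c \<in> cells la. bk_free la k T c \<and> B c = k} {c \<in> cells la. bk_free la k T c \<and> T c = Suc k}"
  (is "bij_betw ?sh ?FB ?F1")
proof (rule bij_betw_byWitness[where f' = "\<lambda>(i, j). (i, j - (N i 3 - N i 2))"])
  have memFB: "(i, j) \<in> ?FB \<longleftrightarrow> (i, j) \<in> cells la \<and> N i 2 \<le> j \<and> j < N i 2 + (N i 4 - N i 3)" for i j
    using bk_free_iff[of i j] bk_count_order[of i] by (auto simp: bender_knuth_def)
  have memF1: "(i, j) \<in> ?F1 \<longleftrightarrow> (i, j) \<in> cells la \<and> N i 3 \<le> j \<and> j < N i 4" for i j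
    using bk_free_iff[of i j] bk_count_order[of i] bk_free_entry_eq_iff[of i j] bk_free_entry[of "(i, j)"]
    by auto
  have row_cell: "(i, j') \<in> cells la" if "(i, j) \<in> cells la" "j' < N i 4" for i j j'
    using that bk_count_le[of i 4] by (auto simp: cells_iff)
  show "\<forall>x\<in>?FB. (\<lambda>(i, j). (i, j - (N i 3 - N i 2))) (?sh x) = x" by auto
  show "\<forall>y\<in>?F1. ?sh ((\<lambda>(i, j). (i, j - (N i 3 - N i 2))) y) = y"
  proof
    fix y assume y: "y \<in> ?F1"
    obtain i j where "y = (i, j)" by fastforce
    with y show "?sh ((\<lambda>(i, j). (i, j - (N i 3 - N i 2))) y) = y" using memF1 by auto
  qed
  show "?sh ` ?FB \<subseteq> ?F1"
  proof (rule image_subsetI)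
    fix x assume x: "x \<in> ?FB"
    obtain i j where ij: "x = (i, j)" by fastforce
    from x have h: "(i, j) \<in> cells la" "N i 2 \<le> j" "j < N i 2 + (N i 4 - N i 3)"
      unfolding ij memFB by blast+
    have "N i 2 \<le> N i 3" "N i 3 \<le> N i 4" by (rule bk_count_order)+
    with h have "N i 3 \<le> j + (N i 3 - N i 2)" "j + (N i 3 - N i 2) < N i 4" by linarith+
    then have "(i, j + (N i 3 - N i 2)) \<in> ?F1" unfolding memF1 using row_cell[OF h(1)] by simp
    then show "?sh x \<in> ?F1" using ij by simp
  qed
  show "(\<lambda>(i, j). (i, j - (N i 3 - N i 2))) ` ?F1 \<subseteq> ?FB"
  proof (rule image_subsetI)
    fix x assume x: "x \<in> ?F1"
    obtain i j where ij: "x = (i, j)" by fastforce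
    from x have h: "(i, j) \<in> cells la" "N i 3 \<le> j" "j < N i 4"
      unfolding ij memF1 by blast+
    have "N i 2 \<le> N i 3" "N i 3 \<le> N i 4" by (rule bk_count_order)+
    with h have "N i 2 \<le> j - (N i 3 - N i 2)" "j - (N i 3 - N i 2) < N i 2 + (N i 4 - N i 3)"
      by linarith+
    moreover have "(i, j - (N i 3 - N i 2)) \<in> cells la"
      using cells_downward_closed[OF sorted h(1) order.refl] by simp
    ultimately have "(i, j - (N i 3 - N i 2)) \<in> ?FB" unfolding memFB by simp
    then show "(\<lambda>(i, j). (i, j - (N i 3 - N i 2))) x \<in> ?FB" using ij by simp
  qed
qed

lemma card_bender_knuth_eq: "card {c \<in> cells la. B c = k} = card {c \<in> cells la. T c = Suc k}"
proof -
  let ?fixed = "\<lambda>v. {c \<in> cells la. \<not> bk_free la k T c \<and> T c = v}"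
  let ?FB = "{c \<in> cells la. bk_free la k T c \<and> B c = k}"
  let ?F1 = "{c \<in> cells la. bk_free la k T c \<and> T c = Suc k}"
  have split_k: "{c \<in> cells la. B c = k} = ?fixed k \<union> ?FB"
    using bender_knuth_not_free by auto
  have split_Suc_k: "{c \<in> cells la. T c = Suc k} = ?fixed (Suc k) \<union> ?F1" by auto
  have "card {c \<in> cells la. B c = k} = card (?fixed k) + card ?FB"
    unfolding split_k by (rule card_Un_disjoint) (auto simp: finite_cells_subset)
  also have "\<dots> = card (?fixed (Suc k)) + card ?F1"
    using bij_betw_same_card[OF bij_betw_fixed_pairs] bij_betw_same_card[OF bij_betw_free_blocks] by simp
  also have "\<dots> = card {c \<in> cells la. T c = Suc k}"
    unfolding split_Suc_k by (rule card_Un_disjoint[symmetric]) (auto simp: finite_cells_subset)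
  finally show ?thesis .
qed

end

lemma bk_tableau_bender_knuth: "bk_tableau n la k T \<Longrightarrow> bk_tableau n la k (bender_knuth la k T)"
  using bk_tableau.bender_knuth_ssyt by (auto simp: bk_tableau_def)

lemma (in bk_tableau) entry_count_bender_knuth: "entry_count la B v = entry_count la T (Transposition.transpose k (Suc k) v)"
proof -
  interpret BB: bk_tableau n la k B using bk_tableau_bender_knuth bk_tableau_axioms by blast
  have other: "{c \<in> cells la. B c = v} = {c \<in> cells la. T c = v}" if "v \<noteq> k" "v \<noteq> Suc k"
    using that bender_knuth_free_entry bender_knuth_not_free bk_free_entry by fastforce
  show ?thesis
  proof (cases "v = k")
    case True then show ?thesis using card_bender_knuth_eq by (simp add: entry_count_def)
  next
    case False
    show ?thesis
    proof (cases "v = Suc k")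
      case True
      have "card {c \<in> cells la. bender_knuth la k B c = k} = card {c \<in> cells la. B c = Suc k}"
        by (rule BB.card_bender_knuth_eq)
      then show ?thesis using True bender_knuth_involution by (simp add: entry_count_def)
    qed (use False other in \<open>simp add: entry_count_def transpose_def\<close>)
  qed
qed

lemma map_key_transpose_invol:
  "map_key (Transposition.transpose a b) (map_key (Transposition.transpose a b) x) = x"
  by (simp add: map_key_compose[OF inj_transpose inj_transpose] map_key_id[unfolded id_def[symmetric]])

lemma (in bk_tableau) tableau_content_bender_knuth:
  "tableau_content la (bender_knuth la k T) = map_key (Transposition.transpose k (Suc k)) (tableau_content la T)"
  by (rule poly_mapping_eqI) (simp add: lookup_tableau_content map_key.rep_eq[OF inj_transpose] entry_count_bender_knuth)

lemma lookup_schur_map_key_swap: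
  assumes "sorted_wrt (\<ge>) la" "Suc k < n"
  shows "lookup (schur n la) (map_key (Transposition.transpose k (Suc k)) b)
       = lookup (schur n la) b"
proof -
  let ?t = "Transposition.transpose k (Suc k)"
  have loc: "bk_tableau n la k T" if "T \<in> ssyt n la" for T using assms that by (simp add: bk_tableau_def)
  have "bij_betw (bender_knuth la k) {T \<in> ssyt n la. tableau_content la T = b}
      {T \<in> ssyt n la. tableau_content la T = map_key ?t b}"
  proof (rule bij_betw_byWitness[where f' = "bender_knuth la k"])
    show "\<forall>T\<in>{T \<in> ssyt n la. tableau_content la T = b}. bender_knuth la k (bender_knuth la k T) = T"
      using loc bk_tableau.bender_knuth_involution by blast
    show "\<forall>T\<in>{T \<in> ssyt n la. tableau_content la T = map_key ?t b}. bender_knuth la k (bender_knuth la k T) = T"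
      using loc bk_tableau.bender_knuth_involution by blast
    show "bender_knuth la k ` {T \<in> ssyt n la. tableau_content la T = b}
        \<subseteq> {T \<in> ssyt n la. tableau_content la T = map_key ?t b}"
      using loc bk_tableau.bender_knuth_ssyt bk_tableau.tableau_content_bender_knuth by fastforce
    show "bender_knuth la k ` {T \<in> ssyt n la. tableau_content la T = map_key ?t b}
        \<subseteq> {T \<in> ssyt n la. tableau_content la T = b}"
    proof clarify
      fix T assume T: "T \<in> ssyt n la" "tableau_content la T = map_key ?t b"
      show "bender_knuth la k T \<in> ssyt n la \<and> tableau_content la (bender_knuth la k T) = b"
        using bk_tableau.bender_knuth_ssyt[OF loc[OF T(1)]] bk_tableau.tableau_content_bender_knuth[OF loc[OF T(1)]] T(2)
        by (simp add: map_key_transpose_invol)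
    qed
  qed
  then show ?thesis unfolding lookup_schur by (simp add: bij_betw_same_card)
qed

definition map_key_invariant :: "((nat \<Rightarrow>\<^sub>0 'a::zero) \<Rightarrow>\<^sub>0 'b::zero) \<Rightarrow> (nat \<Rightarrow> nat) \<Rightarrow> bool" where
  "map_key_invariant f s \<longleftrightarrow> (\<forall>b. lookup f (map_key s b) = lookup f b)"

lemma map_key_invariant_comp:
  assumes "inj s" "inj s'" "map_key_invariant f s" "map_key_invariant f s'"
  shows "map_key_invariant f (s \<circ> s')"
  using assms unfolding map_key_invariant_def by (metis map_key_compose)

lemma transpose_Suc_conj:
  assumes "a < c"
  shows "Transposition.transpose a (Suc c) = Transposition.transpose c (Suc c) \<circ> Transposition.transpose a c \<circ> Transposition.transpose c (Suc c)"
  using assms by (auto simp: fun_eq_iff transpose_def)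

lemma map_key_invariant_transpose:
  assumes adj: "\<And>k. Suc k < n \<Longrightarrow> map_key_invariant f (Transposition.transpose k (Suc k))"
  assumes "a < b" "b < n"
  shows "map_key_invariant f (Transposition.transpose a b)"
  using assms(2,3)
proof (induction b)
  case 0 then show ?case by simp
next
  case (Suc b)
  show ?case
  proof (cases "a = b")
    case True then show ?thesis using adj Suc by simp
  next
    case False
    then have ab: "a < b" using Suc by simp
    let ?t1 = "Transposition.transpose b (Suc b)" and ?t2 = "Transposition.transpose a b"
    have eq: "Transposition.transpose a (Suc b) = ?t1 \<circ> ?t2 \<circ> ?t1"
      using transpose_Suc_conj[of a b] ab by simp
    have i1: "map_key_invariant f ?t1" using adj Suc by simp
    have i2: "map_key_invariant f ?t2" using Suc ab by simp
    have i12: "map_key_invariant f (?t1 \<circ> ?t2)"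
      by (rule map_key_invariant_comp[OF inj_transpose inj_transpose i1 i2])
    have "map_key_invariant f (?t1 \<circ> ?t2 \<circ> ?t1)"
      by (rule map_key_invariant_comp[OF inj_compose[OF inj_transpose inj_transpose] inj_transpose i12 i1])
    then show ?thesis by (simp only: eq)
  qed
qed

lemma map_key_invariant_permutes:
  assumes adj: "\<And>k. Suc k < n \<Longrightarrow> map_key_invariant f (Transposition.transpose k (Suc k))"
  assumes "s permutes {..<n}"
  shows "map_key_invariant f s"
proof (rule permutes_induct[OF assms(2) finite_lessThan])
  show "map_key_invariant f id" unfolding map_key_invariant_def id_def by (simp add: map_key_id)
next
  fix a b p assume swap: "a \<in> {..<n}" "b \<in> {..<n}" "a \<noteq> b" "map_key_invariant f p" "p permutes {..<n}"
  have it: "map_key_invariant f (Transposition.transpose a b)"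
  proof (cases "a < b")
    case True then show ?thesis using map_key_invariant_transpose[OF adj True] swap by auto
  next
    case False
    then have "b < a" using swap by simp
    then have "map_key_invariant f (Transposition.transpose b a)"
      using map_key_invariant_transpose[OF adj \<open>b < a\<close>] swap by auto
    then show ?thesis by (metis transpose_commute)
  qed
  show "map_key_invariant f (Transposition.transpose a b \<circ> p)"
    by (rule map_key_invariant_comp[OF inj_transpose permutes_inj[OF swap(5)] it swap(4)])
qed

lemma symmetric_schur:
  assumes "sorted_wrt (\<ge>) la"
  shows "symmetric_poly n (schur n la)"
  unfolding symmetric_poly_def
proof (intro conjI allI impI ballI)
  show "\<And>b. b \<in> keys (schur n la) \<Longrightarrow> keys b \<subseteq> {..<n}"
    by (rule keys_schur_subset)
  fix s b assume "s permutes {..<n}"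
  then have "map_key_invariant (schur n la) s"
    by (rule map_key_invariant_permutes[rotated]) (use lookup_schur_map_key_swap[OF assms] in \<open>auto simp: map_key_invariant_def\<close>)
  then show "lookup (schur n la) (map_key s b) = lookup (schur n la) b"
    by (simp add: map_key_invariant_def)
qed

section \<open>Alternants\<close>

lemma sum_single_lookup: "(\<Sum>b\<in>keys p. single b (lookup p b)) = p"
proof (rule poly_mapping_eqI)
  fix x
  have "lookup (\<Sum>b\<in>keys p. single b (lookup p b)) x = (\<Sum>b\<in>keys p. if b = x then lookup p b else 0)"
    by (auto simp: lookup_sum lookup_single when_def intro!: sum.cong)
  also have "\<dots> = lookup p x" by (simp add: in_keys_iff)
  finally show "lookup (\<Sum>b\<in>keys p. single b (lookup p b)) x = lookup p x" .
qed

lemma of_int_mult_single: "(of_int c :: ipoly) * single m d = single m (c * d)"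
  by (metis add_0 mult_single single_of_int of_int_eq_id id_apply)

lemma lookup_of_int_mult: "lookup (of_int c * p :: ipoly) x = c * lookup p x"
proof -
  have "(of_int c :: ipoly) * p = Poly_Mapping.map ((*) c) p"
    by (simp add: mult_map_scale_conv_mult single_of_int[symmetric] del: single_of_int)
  then show ?thesis by (simp add: map.rep_eq when_def)
qed

definition perms :: "nat \<Rightarrow> (nat \<Rightarrow> nat) set" where "perms n = {s. s permutes {..<n}}"

lemma finite_perms: "finite (perms n)"
  unfolding perms_def by (rule finite_permutations) simp

lemma perms_inj: "s \<in> perms n \<Longrightarrow> inj s"
  unfolding perms_def using permutes_inj by blast

lemma perms_permutation: "s \<in> perms n \<Longrightarrow> permutation s"
  unfolding perms_def using permutation_permutes by blast

lemma map_key_perms_comp: "s \<in> perms n \<Longrightarrow> t \<in> perms n \<Longrightarrow> map_key s (map_key t g) = map_key (t \<circ> s) g"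
  by (rule map_key_compose) (auto intro: perms_inj)

lemma sum_perms_reindex:
  assumes "t \<in> perms n"
  shows "(\<Sum>s\<in>perms n. F (t \<circ> s)) = (\<Sum>s\<in>perms n. F s)"
proof (rule sum.reindex_bij_witness[where i = "\<lambda>s. inv t \<circ> s" and j = "\<lambda>s. t \<circ> s"])
  have tp: "t permutes {..<n}" using assms by (simp add: perms_def)
  show "\<And>s. s \<in> perms n \<Longrightarrow> inv t \<circ> (t \<circ> s) = s"
    using permutes_inv_o(2)[OF tp] by (simp add: o_assoc)
  show "\<And>s. s \<in> perms n \<Longrightarrow> t \<circ> s \<in> perms n"
    using tp by (simp add: perms_def permutes_compose)
  show "\<And>s. s \<in> perms n \<Longrightarrow> t \<circ> (inv t \<circ> s) = s"
    using permutes_inv_o(1)[OF tp] by (simp add: o_assoc)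
  show "\<And>s. s \<in> perms n \<Longrightarrow> inv t \<circ> s \<in> perms n"
    using tp by (simp add: perms_def permutes_compose permutes_inv)
qed simp

definition alternant :: "nat \<Rightarrow> (nat \<Rightarrow>\<^sub>0 nat) \<Rightarrow> ipoly" where
  "alternant n g = (\<Sum>s\<in>perms n. single (map_key s g) (sign s))"

lemma alternant_map_key:
  assumes t: "t \<in> perms n"
  shows "alternant n (map_key t g) = of_int (sign t) * alternant n g"
proof -
  have "alternant n (map_key t g) = (\<Sum>s\<in>perms n. single (map_key (t \<circ> s) g) (sign s))"
    unfolding alternant_def by (intro sum.cong refl) (simp add: map_key_perms_comp t)
  also have "\<dots> = (\<Sum>s\<in>perms n. single (map_key (t \<circ> (inv t \<circ> (t \<circ> s))) g) (sign (inv t \<circ> (t \<circ> s))))"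
  proof -
    have tp: "t permutes {..<n}" using t by (simp add: perms_def)
    show ?thesis using permutes_inv_o(2)[OF tp] by (simp add: o_assoc)
  qed
  also have "\<dots> = (\<Sum>s\<in>perms n. single (map_key (t \<circ> (inv t \<circ> s)) g) (sign (inv t \<circ> s)))"
    by (rule sum_perms_reindex[OF t, where F = "\<lambda>s. single (map_key (t \<circ> (inv t \<circ> s)) g) (sign (inv t \<circ> s))"])
  also have "\<dots> = (\<Sum>s\<in>perms n. single (map_key s g) (sign t * sign s))"
  proof (intro sum.cong refl)
    fix s assume s: "s \<in> perms n"
    have tp: "t permutes {..<n}" using t by (simp add: perms_def)
    have "t \<circ> (inv t \<circ> s) = s" using permutes_inv_o(1)[OF tp] by (simp add: o_assoc)
    moreover have "sign (inv t \<circ> s) = sign t * sign s"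
      using sign_compose[OF permutation_inverse[OF perms_permutation[OF t]] perms_permutation[OF s]]
        sign_inverse[OF perms_permutation[OF t]] by simp
    ultimately show "single (map_key (t \<circ> (inv t \<circ> s)) g) (sign (inv t \<circ> s)) = single (map_key s g) (sign t * sign s)" by simp
  qed
  also have "\<dots> = of_int (sign t) * alternant n g"
    unfolding alternant_def sum_distrib_left by (simp add: of_int_mult_single)
  finally show ?thesis .
qed

lemma alternant_repeated_eq_0:
  assumes "i < n" "j < n" "i \<noteq> j" "lookup g i = lookup g j"
  shows "alternant n g = 0"
proof -
  let ?t = "Transposition.transpose i j"
  have t: "?t \<in> perms n" using assms by (simp add: perms_def permutes_swap_id)
  have "map_key ?t g = g"
    by (rule poly_mapping_eqI) (use assms in \<open>simp add: map_key.rep_eq[OF inj_transpose] transpose_def\<close>)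
  have "alternant n (map_key ?t g) = of_int (sign ?t) * alternant n g" by (rule alternant_map_key[OF t])
  then have "alternant n g = of_int (sign ?t) * alternant n g" unfolding \<open>map_key ?t g = g\<close> .
  also have "\<dots> = - alternant n g" using assms by (simp add: sign_swap_id)
  finally show ?thesis by simp
qed

lemma symmetric_poly_keys_bij:
  assumes f: "symmetric_poly n f" and s: "s \<in> perms n"
  shows "bij_betw (map_key s) (keys f) (keys f)"
proof -
  have sp: "s permutes {..<n}" using s by (simp add: perms_def)
  have inj: "inj (map_key s)"
  proof (rule injI)
    fix x y assume "map_key s x = map_key s y"
    then have "lookup x \<circ> s = lookup y \<circ> s" by (metis map_key.rep_eq[OF permutes_inj[OF sp]])
    then show "x = y" using permutes_surj[OF sp] by (metis fun.map_comp poly_mapping_eqI surj_fun_eq)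
  qed
  have into: "map_key s ` keys f \<subseteq> keys f"
    using f sp by (auto simp: symmetric_poly_def in_keys_iff)
  have "map_key s ` keys f = keys f"
    by (rule endo_inj_surj[OF finite_keys into]) (rule inj_on_subset[OF inj], simp)
  then show ?thesis using inj_on_subset[OF inj subset_UNIV] unfolding bij_betw_def by blast
qed

lemma alternant_mult_symmetric:
  assumes f: "symmetric_poly n f"
  shows "alternant n g * f = (\<Sum>b\<in>keys f. of_int (lookup f b) * alternant n (g + b))"
proof -
  have f_eq: "f = (\<Sum>b\<in>keys f. single b (lookup f b))" by (rule sum_single_lookup[symmetric])
  have "alternant n g * f = alternant n g * (\<Sum>b\<in>keys f. single b (lookup f b))"
    using f_eq by (rule arg_cong)
  also have "\<dots> = (\<Sum>s\<in>perms n. \<Sum>b\<in>keys f. single (map_key s g + b) (sign s * lookup f b))"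
    by (simp add: alternant_def sum_distrib_left sum_distrib_right mult_single sum.swap[of _ "perms n"])
  also have "\<dots> = (\<Sum>s\<in>perms n. \<Sum>b\<in>keys f. single (map_key s (g + b)) (sign s * lookup f b))"
  proof (rule sum.cong[OF refl])
    fix s assume s: "s \<in> perms n"
    have sp: "s permutes {..<n}" using s by (simp add: perms_def)
    have "(\<Sum>b\<in>keys f. single (map_key s g + b) (sign s * lookup f b))
        = (\<Sum>b\<in>keys f. single (map_key s g + map_key s b) (sign s * lookup f (map_key s b)))"
      using sum.reindex_bij_betw[OF symmetric_poly_keys_bij[OF f s], of "\<lambda>b. single (map_key s g + b) (sign s * lookup f b)"]
      by simp
    also have "\<dots> = (\<Sum>b\<in>keys f. single (map_key s (g + b)) (sign s * lookup f b))"
      using f sp by (simp add: symmetric_poly_def map_key_plus[OF permutes_inj[OF sp]])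
    finally show "(\<Sum>b\<in>keys f. single (map_key s g + b) (sign s * lookup f b))
        = (\<Sum>b\<in>keys f. single (map_key s (g + b)) (sign s * lookup f b))" .
  qed
  also have "\<dots> = (\<Sum>b\<in>keys f. \<Sum>s\<in>perms n. single (map_key s (g + b)) (sign s * lookup f b))"
    by (rule sum.swap)
  also have "\<dots> = (\<Sum>b\<in>keys f. of_int (lookup f b) * alternant n (g + b))"
    by (simp add: alternant_def sum_distrib_left of_int_mult_single mult.commute)
  finally show ?thesis .
qed

definition strictly_decreasing :: "nat \<Rightarrow> (nat \<Rightarrow>\<^sub>0 nat) \<Rightarrow> bool" where
  "strictly_decreasing n g \<longleftrightarrow> (\<forall>i j. i < j \<longrightarrow> j < n \<longrightarrow> lookup g j < lookup g i)"

lemma strict_mono_self_map_lessThan_id: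
  fixes f :: "nat \<Rightarrow> nat"
  assumes mono: "\<And>i j. i < j \<Longrightarrow> j < n \<Longrightarrow> f i < f j" and into: "\<And>i. i < n \<Longrightarrow> f i < n"
  assumes "i < n"
  shows "f i = i"
proof -
  have ge: "i \<le> f i" if "i < n" for i
    using that
  proof (induction i)
    case (Suc i)
    then have "f i < f (Suc i)" using mono by simp
    with Suc show ?case by simp
  qed simp
  have up: "f i + (j - i) \<le> f j" if "i \<le> j" "j < n" for i j
    using that
  proof (induction j)
    case (Suc j)
    show ?case
    proof (cases "i = Suc j")
      case False
      then have "i \<le> j" using Suc by simp
      then have "f i + (j - i) \<le> f j" using Suc by simp
      moreover have "f j < f (Suc j)" using mono Suc by simp
      ultimately show ?thesis using \<open>i \<le> j\<close> by simp
    qed simp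
  qed simp
  have a: "f i + (n - 1 - i) \<le> f (n - 1)" using up[of i "n - 1"] assms by simp
  have b: "f (n - 1) < n" using into assms by simp
  from a b assms(3) have "f i \<le> i" by arith
  with ge[OF assms(3)] show ?thesis by simp
qed

lemma perms_strictly_decreasing_eq_id:
  assumes s: "s \<in> perms n" and g: "strictly_decreasing n g" and h: "strictly_decreasing n (map_key s g)"
  shows "s = id"
proof -
  have sp: "s permutes {..<n}" using s by (simp add: perms_def)
  have lookup: "lookup (map_key s g) i = lookup g (s i)" for i
    by (simp add: map_key.rep_eq[OF permutes_inj[OF sp]])
  have into: "s i < n" if "i < n" for i using permutes_in_image[OF sp] that by simp
  have mono: "s i < s j" if "i < j" "j < n" for i j
  proof (rule ccontr)
    assume "\<not> s i < s j"
    moreover have "s i \<noteq> s j" using that permutes_inj[OF sp] by (metis inj_eq less_irrefl)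
    ultimately have "s j < s i" by simp
    then have "lookup g (s i) < lookup g (s j)" using g into that unfolding strictly_decreasing_def by auto
    moreover have "lookup g (s j) < lookup g (s i)"
      using h that unfolding strictly_decreasing_def lookup by auto
    ultimately show False by simp
  qed
  show ?thesis
  proof
    fix i show "s i = id i"
    proof (cases "i < n")
      case True then show ?thesis using strict_mono_self_map_lessThan_id[of n s i] mono into by simp
    next
      case False then show ?thesis using permutes_not_in[OF sp] by simp
    qed
  qed
qed

lemma lookup_alternant_strictly_decreasing:
  assumes g: "strictly_decreasing n g" and h: "strictly_decreasing n h"
  shows "lookup (alternant n g) h = (if g = h then 1 else 0)"
proof -
  have "lookup (alternant n g) h = (\<Sum>s\<in>perms n. if map_key s g = h then sign s else 0)"
    unfolding alternant_def lookup_sum by (simp add: lookup_single when_def)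
  also have "\<dots> = (\<Sum>s\<in>perms n. if s = id \<and> g = h then 1 else 0)"
  proof (rule sum.cong[OF refl])
    fix s assume s: "s \<in> perms n"
    show "(if map_key s g = h then sign s else 0) = (if s = id \<and> g = h then 1 else 0)"
    proof (cases "map_key s g = h")
      case True
      then have "s = id" using perms_strictly_decreasing_eq_id[OF s g] h by simp
      then show ?thesis using True by (simp add: id_def map_key_id)
    next
      case False
      then show ?thesis by (auto simp: map_key_id id_def)
    qed
  qed
  also have "\<dots> = (if g = h then 1 else 0)"
  proof -
    have "id \<in> perms n" by (simp add: perms_def permutes_id)
    then show ?thesis using finite_perms by (simp add: sum.If_cases)
  qed
  finally show ?thesis .
qed

definition staircase :: "nat \<Rightarrow> (nat \<Rightarrow>\<^sub>0 nat)" where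
  "staircase n = Abs_poly_mapping (\<lambda>i. if i < n then n - 1 - i else 0)"

lemma lookup_staircase: "lookup (staircase n) i = (if i < n then n - 1 - i else 0)"
proof -
  have "finite {i. (if i < n then n - 1 - i else 0) \<noteq> 0}"
    by (rule finite_subset[of _ "{..<n}"]) auto
  then show ?thesis unfolding staircase_def by (simp add: Abs_poly_mapping_inverse)
qed

lemma strictly_decreasing_staircase: "strictly_decreasing n (staircase n)"
  unfolding strictly_decreasing_def by (auto simp: lookup_staircase)

lemma alternant_staircase_nonzero: "alternant n (staircase n) \<noteq> 0"
proof -
  have "lookup (alternant n (staircase n)) (staircase n) = 1"
    using lookup_alternant_strictly_decreasing[OF strictly_decreasing_staircase strictly_decreasing_staircase]
      by simp
  then show ?thesis by auto
qed

lemma alternant_staircase_mult_cancel: "alternant n (staircase n) * p = alternant n (staircase n) * q \<Longrightarrow> p = q"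
  using alternant_staircase_nonzero by simp

definition part_vec :: "nat list \<Rightarrow> (nat \<Rightarrow>\<^sub>0 nat)" where
  "part_vec la = Abs_poly_mapping (\<lambda>i. if i < length la then la ! i else 0)"

lemma lookup_part_vec: "lookup (part_vec la) i = (if i < length la then la ! i else 0)"
proof -
  have "finite {i. (if i < length la then la ! i else 0) \<noteq> 0}"
    by (rule finite_subset[of _ "{..<length la}"]) auto
  then show ?thesis unfolding part_vec_def by (simp add: Abs_poly_mapping_inverse)
qed

lemma strictly_decreasing_staircase_part_vec:
  assumes "sorted_wrt (\<ge>) la"
  shows "strictly_decreasing n (staircase n + part_vec la)"
  unfolding strictly_decreasing_def
proof (intro allI impI)
  fix i j assume ij: "i < j" "j < n"
  have "lookup (part_vec la) j \<le> lookup (part_vec la) i"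
    using sorted_wrt_nth_less[OF assms ij(1)] ij by (auto simp: lookup_part_vec)
  then show "lookup (staircase n + part_vec la) j < lookup (staircase n + part_vec la) i"
    using ij by (simp add: lookup_add lookup_staircase)
qed

lemma part_vec_inj:
  assumes "partition la" "partition mu" "part_vec la = part_vec mu"
  shows "la = mu"
proof -
  have pos: "0 < lookup (part_vec x) i \<longleftrightarrow> i < length x" if "partition x" for x i
    using partition_nth_pos[OF that] by (auto simp: lookup_part_vec)
  have "length la = length mu"
  proof (rule ccontr)
    assume "length la \<noteq> length mu"
    then consider "length la < length mu" | "length mu < length la" by linarith
    then show False
    proof cases
      case 1
      have "0 < lookup (part_vec mu) (length la)" using pos[OF assms(2)] 1 by simp
      moreover have "\<not> 0 < lookup (part_vec la) (length la)" using pos[OF assms(1)] by simp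
      ultimately show False using assms(3) by simp
    next
      case 2
      have "0 < lookup (part_vec la) (length mu)" using pos[OF assms(1)] 2 by simp
      moreover have "\<not> 0 < lookup (part_vec mu) (length mu)" using pos[OF assms(2)] by simp
      ultimately show False using assms(3) by simp
    qed
  qed
  moreover have "la ! i = mu ! i" if "i < length la" for i
    using arg_cong[OF assms(3), of "\<lambda>p. lookup p i"] that \<open>length la = length mu\<close>
      by (simp add: lookup_part_vec)
  ultimately show ?thesis by (rule nth_equalityI)
qed

lemma part_vec_exists:
  assumes dec: "\<And>i. Suc i < n \<Longrightarrow> lookup v (Suc i) \<le> lookup v i" and out: "\<And>i. n \<le> i \<Longrightarrow> lookup v i = 0"
  shows "\<exists>mu \<in> partitions_le n. part_vec mu = v"
proof -
  have anti: "antimono (lookup v)"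
    unfolding antimono_iff_le_Suc
  proof
    fix i show "lookup v (Suc i) \<le> lookup v i"
      by (cases "Suc i < n") (simp_all add: dec out not_less)
  qed
  define L where "L = (LEAST i. lookup v i = 0)"
  have L: "L \<le> n" "lookup v L = 0"
    unfolding L_def using out[of n] by (auto intro: Least_le LeastI)
  have pos: "0 < lookup v i \<longleftrightarrow> i < L" for i
  proof
    assume "i < L"
    then show "0 < lookup v i" using not_less_Least[of i "\<lambda>i. lookup v i = 0"] by (simp add: L_def)
  next
    assume "0 < lookup v i"
    moreover have "lookup v i \<le> lookup v L" if "L \<le> i" using antimonoD[OF anti that] .
    ultimately show "i < L" using L(2) by (cases "L \<le> i") auto
  qed
  define mu where "mu = map (lookup v) [0..<L]"
  have "partition mu"
    unfolding partition_def mu_def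
  proof
    show "sorted_wrt (\<ge>) (map (lookup v) [0..<L])"
      by (auto simp: sorted_wrt_iff_nth_less intro!: antimonoD[OF anti])
    show "0 \<notin> set (map (lookup v) [0..<L])"
    proof
      assume "0 \<in> set (map (lookup v) [0..<L])"
      then obtain i where "i < L" "lookup v i = 0" by auto
      with pos[of i] show False by simp
    qed
  qed
  moreover have "part_vec mu = v"
  proof (rule poly_mapping_eqI)
    fix i
    show "lookup (part_vec mu) i = lookup v i"
    proof (cases "i < L")
      case False
      with pos[of i] have "lookup v i = 0" by simp
      with False show ?thesis by (simp add: lookup_part_vec mu_def)
    qed (simp add: lookup_part_vec mu_def)
  qed
  ultimately show ?thesis using L by (auto simp: partitions_le_def mu_def)
qed

lemma rank_permutes:
  fixes f :: "nat \<Rightarrow> 'a::linorder"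
  assumes inj: "inj_on f {..<n}"
  defines "rk \<equiv> \<lambda>i. if i < n then card {j. j < n \<and> f i < f j} else i"
  shows "rk permutes {..<n}" and "\<And>a b. a < n \<Longrightarrow> b < n \<Longrightarrow> f a < f b \<Longrightarrow> rk b < rk a"
proof -
  show rk_anti: "rk b < rk a" if "a < n" "b < n" "f a < f b" for a b
  proof -
    have "{j. j < n \<and> f b < f j} \<subset> {j. j < n \<and> f a < f j}" using that by auto
    then have "card {j. j < n \<and> f b < f j} < card {j. j < n \<and> f a < f j}"
      by (rule psubset_card_mono[rotated]) simp
    then show ?thesis unfolding rk_def using that by simp
  qed
  have "rk i < n" if "i < n" for i
  proof -
    have "{j. j < n \<and> f i < f j} \<subset> {..<n}" using that by auto
    then have "card {j. j < n \<and> f i < f j} < card {..<n}" by (rule psubset_card_mono[OF finite_lessThan])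
    then show ?thesis unfolding rk_def using that by simp
  qed
  then have img: "rk ` {..<n} \<subseteq> {..<n}" by auto
  have rk_inj: "inj_on rk {..<n}"
  proof (rule inj_onI)
    fix a b assume ab: "a \<in> {..<n}" "b \<in> {..<n}" "rk a = rk b"
    then have "\<not> f a < f b" "\<not> f b < f a" using rk_anti[of a b] rk_anti[of b a] by auto
    then show "a = b" using inj ab(1,2) by (metis inj_on_eq_iff linorder_neqE)
  qed
  have "bij_betw rk {..<n} {..<n}"
    using endo_inj_surj[OF finite_lessThan img rk_inj] rk_inj by (simp add: bij_betw_def)
  then show "rk permutes {..<n}" by (rule bij_imp_permutes) (simp add: rk_def)
qed

lemma perms_sort_strictly_decreasing:
  assumes inj: "inj_on (lookup g) {..<n}"
  shows "\<exists>s\<in>perms n. strictly_decreasing n (map_key s g)"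
proof -
  obtain rk where rk: "rk permutes {..<n}" "\<And>a b. a < n \<Longrightarrow> b < n \<Longrightarrow> lookup g a < lookup g b \<Longrightarrow> rk b < rk a"
    using rank_permutes[OF inj] by blast
  define s where "s = inv rk"
  have sp: "s permutes {..<n}" unfolding s_def by (rule permutes_inv[OF rk(1)])
  have rs: "rk (s i) = i" for i unfolding s_def using permutes_inverses(1)[OF rk(1)] by simp
  have "lookup g (s j) < lookup g (s i)" if ij: "i < j" "j < n" for i j
  proof -
    have "s i < n" "s j < n" using ij permutes_in_image[OF sp] by auto
    moreover have "s i \<noteq> s j" using ij rs[of i] rs[of j] by (metis less_irrefl)
    ultimately have "lookup g (s i) \<noteq> lookup g (s j)" using inj by (simp add: inj_on_eq_iff)
    moreover have "\<not> lookup g (s i) < lookup g (s j)"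
      using rk(2)[OF \<open>s i < n\<close> \<open>s j < n\<close>] ij rs[of i] rs[of j] by auto
    ultimately show ?thesis by simp
  qed
  then have "strictly_decreasing n (map_key s g)"
    by (simp add: strictly_decreasing_def map_key.rep_eq[OF permutes_inj[OF sp]])
  then show ?thesis using sp by (auto simp: perms_def)
qed

lemma strictly_decreasing_eq_staircase_plus_part_vec:
  assumes dec: "strictly_decreasing n e" and out: "\<And>i. n \<le> i \<Longrightarrow> lookup e i = 0"
  shows "\<exists>mu \<in> partitions_le n. e = staircase n + part_vec mu"
proof -
  have ge: "lookup (staircase n) i \<le> lookup e i" if "i < n" for i
    using that
  proof (induction "n - i" arbitrary: i)
    case (Suc k)
    show ?case
    proof (cases "Suc i < n")
      case True
      then have "lookup (staircase n) (Suc i) \<le> lookup e (Suc i)" using Suc by simp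
      moreover have "lookup e (Suc i) < lookup e i" using dec True unfolding strictly_decreasing_def by simp
      ultimately show ?thesis using True by (simp add: lookup_staircase)
    qed (use Suc.prems in \<open>simp add: lookup_staircase\<close>)
  qed simp
  define v where "v = e - staircase n"
  have lv: "lookup v i = lookup e i - lookup (staircase n) i" for i
    by (simp add: v_def lookup_minus)
  have ev: "e = staircase n + v"
    by (rule poly_mapping_eqI) (use ge out in \<open>force simp: lookup_add lv lookup_staircase\<close>)
  have "\<exists>mu \<in> partitions_le n. part_vec mu = v"
  proof (rule part_vec_exists)
    fix i assume i: "Suc i < n"
    have "lookup e (Suc i) < lookup e i" using dec i unfolding strictly_decreasing_def by simp
    then show "lookup v (Suc i) \<le> lookup v i" using i by (simp add: lv lookup_staircase)
  qed (simp add: lv out)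
  then show ?thesis using ev by blast
qed

lemma alternant_staircase_plus_keys:
  assumes keys: "keys b \<subseteq> {..<n}"
  shows "\<exists>e mu. mu \<in> partitions_le n \<and>
    alternant n (staircase n + b) = of_int e * alternant n (staircase n + part_vec mu)"
proof (cases "\<exists>i j. i < n \<and> j < n \<and> i \<noteq> j \<and> lookup (staircase n + b) i = lookup (staircase n + b) j")
  case True
  then have "alternant n (staircase n + b) = 0" using alternant_repeated_eq_0 by blast
  moreover have "[] \<in> partitions_le n" by (simp add: partitions_le_def partition_def)
  ultimately show ?thesis by (intro exI[of _ 0] exI[of _ "[]"]) simp
next
  case False
  let ?g = "staircase n + b"
  obtain s where s: "s \<in> perms n" "strictly_decreasing n (map_key s ?g)"
    using perms_sort_strictly_decreasing[of ?g n] False by (auto simp: inj_on_def)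
  have sp: "s permutes {..<n}" using s by (simp add: perms_def)
  have "lookup (map_key s ?g) i = 0" if "n \<le> i" for i
    using that permutes_not_in[OF sp, of i] keys
    by (auto simp: map_key.rep_eq[OF permutes_inj[OF sp]] lookup_add lookup_staircase in_keys_iff)
  then obtain mu where mu: "mu \<in> partitions_le n" "map_key s ?g = staircase n + part_vec mu"
    using strictly_decreasing_eq_staircase_plus_part_vec[OF s(2)] by blast
  have "alternant n ?g = of_int (sign s) * alternant n (map_key s ?g)"
    by (simp add: alternant_map_key[OF s(1)] mult.assoc[symmetric] flip: of_int_mult)
  then show ?thesis using mu by auto
qed

section \<open>The bialternant formula\<close>

definition content_from :: "nat list \<Rightarrow> (nat \<times> nat \<Rightarrow> nat) \<Rightarrow> nat \<Rightarrow> nat \<Rightarrow> nat" where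
  "content_from la T j v = card {c \<in> cells la. j \<le> snd c \<and> T c = v}"

definition column_content :: "nat list \<Rightarrow> (nat \<times> nat \<Rightarrow> nat) \<Rightarrow> nat \<Rightarrow> nat \<Rightarrow> nat" where
  "column_content la T j v = card {c \<in> cells la. snd c = j \<and> T c = v}"

definition width :: "nat list \<Rightarrow> nat" where "width la = (if la = [] then 0 else hd la)"

lemma cells_width:
  assumes "sorted_wrt (\<ge>) la" "c \<in> cells la"
  shows "snd c < width la"
proof -
  obtain i j where c: "c = (i, j)" "i < length la" "j < la ! i"
    using assms(2) by (cases c) (auto simp: cells_iff)
  have "la ! i \<le> la ! 0" using assms(1) c(2)
    by (cases "i = 0") (auto intro: sorted_wrt_nth_less[OF assms(1)])
  moreover have "la \<noteq> []" using c by auto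
  ultimately show ?thesis using c by (simp add: width_def hd_conv_nth)
qed

lemma content_from_Suc: "content_from la T j v = content_from la T (Suc j) v + column_content la T j v"
proof -
  have "{c \<in> cells la. j \<le> snd c \<and> T c = v} =
      {c \<in> cells la. Suc j \<le> snd c \<and> T c = v} \<union> {c \<in> cells la. snd c = j \<and> T c = v}" by auto
  moreover have "{c \<in> cells la. Suc j \<le> snd c \<and> T c = v} \<inter> {c \<in> cells la. snd c = j \<and> T c = v} = {}" by auto
  ultimately show ?thesis unfolding content_from_def column_content_def
    by (simp add: card_Un_disjoint finite_cells_subset)
qed

lemma column_content_le_1:
  assumes T: "T \<in> ssyt n la" and s: "sorted_wrt (\<ge>) la"
  shows "column_content la T j v \<le> 1"
proof -
  have "\<forall>x\<in>{c \<in> cells la. snd c = j \<and> T c = v}. \<forall>y\<in>{c \<in> cells la. snd c = j \<and> T c = v}. x = y"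
  proof (intro ballI)
    fix x y assume x: "x \<in> {c \<in> cells la. snd c = j \<and> T c = v}" and y: "y \<in> {c \<in> cells la. snd c = j \<and> T c = v}"
    obtain i where xi: "x = (i, j)" using x by (cases x) auto
    obtain i' where yi: "y = (i', j)" using y by (cases y) auto
    have "\<not> i < i'" using ssyt_col_strict[OF T s, of i' j i] x y xi yi by auto
    moreover have "\<not> i' < i" using ssyt_col_strict[OF T s, of i j i'] x y xi yi by auto
    ultimately show "x = y" using xi yi by simp
  qed
  then show ?thesis unfolding column_content_def using card_le_Suc0_iff_eq[OF finite_cells_subset] by simp
qed

lemma content_from_beyond_width:
  assumes "sorted_wrt (\<ge>) la" "width la \<le> j"
  shows "content_from la T j v = 0"
proof -
  have "{c \<in> cells la. j \<le> snd c \<and> T c = v} = {}"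
    using cells_width[OF assms(1)] assms(2) by fastforce
  then show ?thesis unfolding content_from_def by (metis card.empty)
qed

definition last_bad_column :: "nat list \<Rightarrow> (nat \<times> nat \<Rightarrow> nat) \<Rightarrow> nat" where
  "last_bad_column la T = Max {j. \<not> antimono (content_from la T j)}"

definition first_ascent :: "nat list \<Rightarrow> (nat \<times> nat \<Rightarrow> nat) \<Rightarrow> nat" where
  "first_ascent la T = (LEAST v. content_from la T (last_bad_column la T) v < content_from la T (last_bad_column la T) (Suc v))"

definition restrict_columns :: "nat \<Rightarrow> (nat \<times> nat \<Rightarrow> nat) \<Rightarrow> nat \<times> nat \<Rightarrow> nat" where
  "restrict_columns J T c = (if snd c < J then T c else 0)"

text \<open>A tableau is bad if the content of its columns j, j+1, ... fails to be a partition for some j.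
  For the last such column J and the first ascent K of that content, apply the Bender-Knuth move for K
  to the columns left of J. This is an involution on bad tableaux which changes \<delta> + content by the
  transposition of K and K+1, so it reverses the sign of the alternant. The only tableau that is not
  bad is the one whose i-th row is filled with i.\<close>

definition bk_cancel :: "nat list \<Rightarrow> (nat \<times> nat \<Rightarrow> nat) \<Rightarrow> nat \<times> nat \<Rightarrow> nat" where
  "bk_cancel la T c = (if snd c < last_bad_column la T then bender_knuth (map (min (last_bad_column la T)) la) (first_ascent la T) (restrict_columns (last_bad_column la T) T) c else T c)"

lemma cells_map_min: "cells (map (min J) la) = {c \<in> cells la. snd c < J}"
  by (auto simp: cells_def)

lemma sorted_map_min: fixes J :: nat assumes "sorted_wrt (\<ge>) la" shows "sorted_wrt (\<ge>) (map (min J) la)"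
proof -
  have "sorted_wrt (\<lambda>x y. min J y \<le> min J x) la"
    using assms by (rule sorted_wrt_mono_rel[rotated]) (auto simp: min_def)
  then show ?thesis unfolding sorted_wrt_map by simp
qed

lemma restrict_columns_ssyt:
  assumes "T \<in> ssyt n la"
  shows "restrict_columns J T \<in> ssyt n (map (min J) la)"
  using assms unfolding ssyt_def cells_map_min restrict_columns_def by (auto simp: cells_iff)

locale bad_tableau =
  fixes n :: nat and la :: "nat list" and T :: "nat \<times> nat \<Rightarrow> nat"
  assumes sorted: "sorted_wrt (\<ge>) la" and T: "T \<in> ssyt n la" and bad: "\<exists>j. \<not> antimono (content_from la T j)"
begin

abbreviation "J \<equiv> last_bad_column la T"
abbreviation "K \<equiv> first_ascent la T"
abbreviation "la' \<equiv> map (min J) la"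
abbreviation "R \<equiv> restrict_columns J T"

lemma finite_bad_columns: "finite {j. \<not> antimono (content_from la T j)}"
proof -
  have d: "antimono (content_from la T j)" if "width la \<le> j" for j
    using content_from_beyond_width[OF sorted that] by (simp add: antimono_iff_le_Suc)
  have "{j. \<not> antimono (content_from la T j)} \<subseteq> {..<width la}"
  proof
    fix j assume "j \<in> {j. \<not> antimono (content_from la T j)}"
    then show "j \<in> {..<width la}" using d[of j] by (cases "width la \<le> j") auto
  qed
  then show ?thesis by (rule finite_subset) simp
qed

lemma J_not_antimono: "\<not> antimono (content_from la T J)"
  using Max_in[OF finite_bad_columns] bad unfolding last_bad_column_def by auto

lemma antimono_right_of_J: "J < j \<Longrightarrow> antimono (content_from la T j)"
  using Max_ge[OF finite_bad_columns, of j] unfolding last_bad_column_def by (auto simp: not_le[symmetric])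

lemma K_ascent: "content_from la T J K < content_from la T J (Suc K)"
proof -
  have "\<exists>v. content_from la T J v < content_from la T J (Suc v)"
    using J_not_antimono by (auto simp: antimono_iff_le_Suc not_le)
  then show ?thesis unfolding first_ascent_def by (rule LeastI_ex)
qed

lemma JK_column_content: "column_content la T J K = 0" "column_content la T J (Suc K) = 1" "content_from la T J (Suc K) = Suc (content_from la T J K)"
proof -
  have d: "content_from la T (Suc J) (Suc K) \<le> content_from la T (Suc J) K"
    using antimono_right_of_J[of "Suc J"] by (simp add: antimono_iff_le_Suc)
  have c1: "column_content la T J (Suc K) \<le> 1" "column_content la T J K \<le> 1"
    using column_content_le_1[OF T sorted] by auto
  have kp: "content_from la T (Suc J) K + column_content la T J K < content_from la T (Suc J) (Suc K) + column_content la T J (Suc K)"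
    using K_ascent content_from_Suc[of la T J] by simp
  show "column_content la T J K = 0" "column_content la T J (Suc K) = 1" using d c1 kp by linarith+
  then show "content_from la T J (Suc K) = Suc (content_from la T J K)"
    using d kp content_from_Suc[of la T J] by simp
qed

lemma column_J_not_K: "(i, J) \<in> cells la \<Longrightarrow> T (i, J) \<noteq> K"
proof
  assume h: "(i, J) \<in> cells la" "T (i, J) = K"
  have "0 < card {c \<in> cells la. snd c = J \<and> T c = K}"
    using h by (subst card_gt_0_iff) (auto simp: finite_cells_subset)
  then have "card {c \<in> cells la. snd c = J \<and> T c = K} \<noteq> 0" by simp
  then show False using JK_column_content(1) by (simp add: column_content_def)
qed

lemma Suc_K_less_n: "Suc K < n"
proof -
  have "card {c \<in> cells la. snd c = J \<and> T c = Suc K} \<noteq> 0"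
    using JK_column_content(2) by (simp add: column_content_def)
  then have "{c \<in> cells la. snd c = J \<and> T c = Suc K} \<noteq> {}" by (metis card.empty)
  then obtain c where c: "c \<in> cells la" "T c = Suc K" by blast
  show ?thesis using ssytD(1)[OF T c(1)] c(2) by simp
qed

lemma bk_tableau_restricted: "bk_tableau n la' K R"
  using sorted_map_min[OF sorted] restrict_columns_ssyt[OF T] Suc_K_less_n by (simp add: bk_tableau_def)

abbreviation "B' \<equiv> bender_knuth la' K R"

lemma B'_cases: "B' c = R c \<or> (bk_free la' K R c \<and> (B' c = K \<or> B' c = Suc K) \<and> (R c = K \<or> R c = Suc K))"
  using bk_tableau.bender_knuth_not_free[OF bk_tableau_restricted] bk_tableau.bender_knuth_free_entry[OF bk_tableau_restricted] bk_tableau.bk_free_entry[OF bk_tableau_restricted] by blast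

lemma B'_ssyt: "B' \<in> ssyt n la'" using bk_tableau.bender_knuth_ssyt[OF bk_tableau_restricted] .

lemma bk_cancel_eq: "bk_cancel la T c = (if snd c < J then B' c else T c)"
  by (simp add: bk_cancel_def)

lemma bk_cancel_row_mono:
  assumes c: "(i, Suc j) \<in> cells la"
  shows "bk_cancel la T (i, j) \<le> bk_cancel la T (i, Suc j)"
proof -
  consider "Suc j < J" | "Suc j = J" | "J < Suc j" by linarith
  then show ?thesis
  proof cases
    case 1
    then have "(i, Suc j) \<in> cells la'" using c cells_map_min by auto
    then show ?thesis using ssytD(3)[OF B'_ssyt] 1 by (simp add: bk_cancel_eq)
  next
    case 2
    have "T (i, j) \<le> T (i, Suc j)" using ssytD(3)[OF T c] .
    moreover have "T (i, Suc j) \<noteq> K" using column_J_not_K c 2 by simp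
    moreover have "R (i, j) = T (i, j)" using 2 by (simp add: restrict_columns_def)
    ultimately have "B' (i, j) \<le> T (i, Suc j)" using B'_cases[of "(i, j)"] by auto
    then show ?thesis using 2 by (simp add: bk_cancel_eq)
  qed (use ssytD(3)[OF T c] in \<open>simp add: bk_cancel_eq\<close>)
qed

lemma bk_cancel_ssyt: "bk_cancel la T \<in> ssyt n la"
proof -
  note BS = ssytD[OF B'_ssyt]
  have cells': "c \<in> cells la'" if "c \<in> cells la" "snd c < J" for c using that cells_map_min by auto
  have "bk_cancel la T c < n" if "c \<in> cells la" for c
    using that BS(1)[OF cells'[OF that]] ssytD(1)[OF T that] by (simp add: bk_cancel_eq)
  moreover have "bk_cancel la T c = 0" if "c \<notin> cells la" for c
  proof -
    have "c \<notin> cells la'" using that cells_map_min by auto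
    then show ?thesis using BS(2) ssytD(2)[OF T that] by (simp add: bk_cancel_eq)
  qed
  moreover have "bk_cancel la T (i, j) < bk_cancel la T (Suc i, j)" if c: "(Suc i, j) \<in> cells la" for i j
  proof (cases "j < J")
    case True
    then have "(Suc i, j) \<in> cells la'" using c cells_map_min by auto
    then show ?thesis using BS(4) True by (simp add: bk_cancel_eq)
  qed (use ssytD(4)[OF T c] in \<open>simp add: bk_cancel_eq\<close>)
  ultimately show ?thesis using bk_cancel_row_mono by (simp add: ssyt_def)
qed

lemma content_from_bk_cancel: "J \<le> j \<Longrightarrow> content_from la (bk_cancel la T) j = content_from la T j"
  unfolding content_from_def by (intro ext arg_cong[where f = card]) (auto simp: bk_cancel_eq)

lemma bk_cancel_bad: "\<not> antimono (content_from la (bk_cancel la T) J)"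
  using J_not_antimono content_from_bk_cancel by simp

lemma last_bad_column_bk_cancel: "last_bad_column la (bk_cancel la T) = J"
proof -
  have "{j. \<not> antimono (content_from la (bk_cancel la T) j)} \<subseteq> {..J}"
  proof
    fix j assume j: "j \<in> {j. \<not> antimono (content_from la (bk_cancel la T) j)}"
    show "j \<in> {..J}"
    proof (rule ccontr)
      assume "j \<notin> {..J}"
      then have "J < j" by simp
      then show False using antimono_right_of_J[of j] content_from_bk_cancel[of j] j by simp
    qed
  qed
  moreover have "J \<in> {j. \<not> antimono (content_from la (bk_cancel la T) j)}"
    using bk_cancel_bad by simp
  ultimately have "Max {j. \<not> antimono (content_from la (bk_cancel la T) j)} = J"
    by (intro Max_eqI) (auto intro: finite_subset[of _ "{..J}"])
  then show ?thesis by (simp add: last_bad_column_def)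
qed

lemma first_ascent_bk_cancel: "first_ascent la (bk_cancel la T) = K"
  unfolding first_ascent_def last_bad_column_bk_cancel content_from_bk_cancel[OF order.refl] by simp

lemma restrict_columns_bk_cancel: "restrict_columns J (bk_cancel la T) = B'"
proof
  fix c :: "nat \<times> nat"
  show "restrict_columns J (bk_cancel la T) c = B' c"
  proof (cases "snd c < J")
    case False
    then have "c \<notin> cells la'" using cells_map_min by auto
    then show ?thesis using ssytD(2)[OF B'_ssyt] False by (simp add: restrict_columns_def)
  qed (simp add: restrict_columns_def bk_cancel_eq)
qed

lemma bk_cancel_involution: "bk_cancel la (bk_cancel la T) = T"
proof
  fix c :: "nat \<times> nat"
  have "bk_cancel la (bk_cancel la T) c = (if snd c < J then bender_knuth la' K B' c else bk_cancel la T c)"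
    unfolding bk_cancel_def last_bad_column_bk_cancel first_ascent_bk_cancel restrict_columns_bk_cancel
      by simp
  also have "\<dots> = T c"
    using bk_tableau.bender_knuth_involution[OF bk_tableau_restricted]
      by (simp add: bk_cancel_eq restrict_columns_def)
  finally show "bk_cancel la (bk_cancel la T) c = T c" .
qed

lemma entry_count_split:
  "entry_count la X v = entry_count la' X v + content_from la X J v"
proof -
  have "{c \<in> cells la. X c = v} = {c \<in> cells la'. X c = v} \<union> {c \<in> cells la. J \<le> snd c \<and> X c = v}"
    using cells_map_min by auto
  moreover have "{c \<in> cells la'. X c = v} \<inter> {c \<in> cells la. J \<le> snd c \<and> X c = v} = {}"
    using cells_map_min by auto
  ultimately show ?thesis unfolding entry_count_def content_from_def
    by (simp add: card_Un_disjoint finite_cells_subset)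
qed

lemma entry_count_cong: "(\<And>c. c \<in> cells la' \<Longrightarrow> X c = Y c) \<Longrightarrow> entry_count la' X v = entry_count la' Y v"
  unfolding entry_count_def by (intro arg_cong[where f = card]) auto

lemma entry_count_bk_cancel: "entry_count la (bk_cancel la T) v = entry_count la' R (Transposition.transpose K (Suc K) v) + content_from la T J v"
proof -
  have "entry_count la (bk_cancel la T) v = entry_count la' B' v + content_from la T J v"
    using entry_count_split[of "bk_cancel la T" v] content_from_bk_cancel[OF order.refl]
      entry_count_cong[of "bk_cancel la T" B' v] cells_map_min by (auto simp: bk_cancel_eq)
  also have "entry_count la' B' v = entry_count la' R (Transposition.transpose K (Suc K) v)"
    by (rule bk_tableau.entry_count_bender_knuth[OF bk_tableau_restricted])
  finally show ?thesis .
qed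

lemma entry_count_split_restrict: "entry_count la T v = entry_count la' R v + content_from la T J v"
  using entry_count_split[of T v] entry_count_cong[of T R v] cells_map_min
    by (auto simp: restrict_columns_def)

end

lemma (in bad_tableau) staircase_plus_content_bk_cancel:
  "staircase n + tableau_content la (bk_cancel la T) = map_key (Transposition.transpose K (Suc K)) (staircase n + tableau_content la T)"
proof (rule poly_mapping_eqI)
  fix v
  let ?t = "Transposition.transpose K (Suc K)"
  have key: "lookup (staircase n) v + content_from la T J v = lookup (staircase n) (?t v) + content_from la T J (?t v)"
  proof -
    have "lookup (staircase n) K = Suc (lookup (staircase n) (Suc K))"
      using Suc_K_less_n by (simp add: lookup_staircase)
    then show ?thesis using JK_column_content(3) by (auto simp: transpose_def)
  qed
  have "lookup (staircase n + tableau_content la (bk_cancel la T)) v = lookup (staircase n) v + entry_count la' R (?t v) + content_from la T J v"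
    by (simp add: lookup_add lookup_tableau_content entry_count_bk_cancel)
  also have "\<dots> = lookup (staircase n) (?t v) + entry_count la' R (?t v) + content_from la T J (?t v)"
    using key by simp
  also have "\<dots> = lookup (map_key ?t (staircase n + tableau_content la T)) v"
    by (simp add: map_key.rep_eq[OF inj_transpose] lookup_add lookup_tableau_content entry_count_split_restrict)
  finally show "lookup (staircase n + tableau_content la (bk_cancel la T)) v = lookup (map_key ?t (staircase n + tableau_content la T)) v" .
qed

lemma (in bad_tableau) alternant_bk_cancel:
  "alternant n (staircase n + tableau_content la (bk_cancel la T)) = - alternant n (staircase n + tableau_content la T)"
proof -
  have t: "Transposition.transpose K (Suc K) \<in> perms n"
    using Suc_K_less_n by (simp add: perms_def permutes_swap_id)
  show ?thesis unfolding staircase_plus_content_bk_cancel alternant_map_key[OF t] by (simp add: sign_swap_id)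
qed

definition row_tableau :: "nat list \<Rightarrow> nat \<times> nat \<Rightarrow> nat" where
  "row_tableau la c = (if c \<in> cells la then fst c else 0)"

lemma row_tableau_ssyt:
  assumes s: "sorted_wrt (\<ge>) la" and l: "length la \<le> n"
  shows "row_tableau la \<in> ssyt n la"
proof -
  have "(i, j) \<in> cells la" if "(Suc i, j) \<in> cells la" for i j
    using cells_downward_closed[OF s that] by simp
  then show ?thesis using l by (auto simp: ssyt_def row_tableau_def cells_iff)
qed

lemma content_from_row_tableau: "content_from la (row_tableau la) j v = (if v < length la then la ! v - j else 0)"
proof -
  have "{c \<in> cells la. j \<le> snd c \<and> row_tableau la c = v} = (if v < length la then {v} \<times> {j..<la ! v} else {})"
    by (auto simp: row_tableau_def cells_iff)
  then show ?thesis unfolding content_from_def by simp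
qed

lemma entry_count_row_tableau: "entry_count la (row_tableau la) v = (if v < length la then la ! v else 0)"
proof -
  have "{c \<in> cells la. row_tableau la c = v} = (if v < length la then {v} \<times> {..<la ! v} else {})"
    by (auto simp: row_tableau_def cells_iff)
  then show ?thesis unfolding entry_count_def by simp
qed

lemma tableau_content_row_tableau: "tableau_content la (row_tableau la) = part_vec la"
  by (rule poly_mapping_eqI) (simp add: lookup_tableau_content entry_count_row_tableau lookup_part_vec)

lemma antimono_content_from_row_tableau:
  assumes s: "sorted_wrt (\<ge>) la"
  shows "antimono (content_from la (row_tableau la) j)"
  unfolding antimono_iff_le_Suc
proof
  fix v
  show "content_from la (row_tableau la) j (Suc v) \<le> content_from la (row_tableau la) j v"
  proof (cases "Suc v < length la")
    case True
    then have "la ! Suc v \<le> la ! v" using sorted_wrt_nth_less[OF s, of v "Suc v"] by simp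
    then show ?thesis using True by (simp add: content_from_row_tableau diff_le_mono)
  qed (simp add: content_from_row_tableau)
qed

lemma content_from_pred_first_jump_eq_0:
  assumes T: "T \<in> ssyt n la" and s: "sorted_wrt (\<ge>) la"
    and right: "\<And>i j'. (i, j') \<in> cells la \<Longrightarrow> Suc j \<le> j' \<Longrightarrow> T (i, j') = i"
    and i0: "(i0, j) \<in> cells la" "i0 < T (i0, j)"
    and below: "\<And>i. i < i0 \<Longrightarrow> (i, j) \<in> cells la \<Longrightarrow> T (i, j) = i"
  shows "content_from la T j (T (i0, j) - 1) = 0"
proof -
  let ?v = "T (i0, j)"
  have nc: "(i0, Suc j) \<notin> cells la"
  proof
    assume h: "(i0, Suc j) \<in> cells la"
    have "T (i0, j) \<le> T (i0, Suc j)" using ssytD(3)[OF T h] .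
    then show False using right[OF h order.refl] i0(2) by simp
  qed
  have "False" if c: "(i, j') \<in> cells la" "j \<le> j'" "T (i, j') = ?v - 1" for i j'
  proof (cases "j' = j")
    case False
    then have "Suc j \<le> j'" using c by simp
    then have "T (i, j') = i" using right c(1) by simp
    then have "i0 \<le> i" using c(3) i0(2) by simp
    then have "(i0, Suc j) \<in> cells la"
      using cells_downward_closed[OF s c(1)] \<open>Suc j \<le> j'\<close> by simp
    then show False using nc by simp
  next
    case True
    consider "i < i0" | "i = i0" | "i0 < i" by linarith
    then show False
    proof cases
      case 3
      then have "T (i0, j) < T (i, j)" using ssyt_col_strict[OF T s, of i j i0] c True by simp
      then show False using c True by simp
    qed (use below[of i] c True i0(2) in auto)
  qed
  then have "{c \<in> cells la. j \<le> snd c \<and> T c = ?v - 1} = {}" by fastforce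
  then show ?thesis unfolding content_from_def by (metis card.empty)
qed

lemma ssyt_antimono_column:
  assumes T: "T \<in> ssyt n la" and s: "sorted_wrt (\<ge>) la" and good: "antimono (content_from la T j)"
    and right: "\<And>i j'. (i, j') \<in> cells la \<Longrightarrow> Suc j \<le> j' \<Longrightarrow> T (i, j') = i"
    and ij: "(i, j) \<in> cells la"
  shows "T (i, j) = i"
proof (rule ccontr)
  assume "T (i, j) \<noteq> i"
  then have ex: "\<exists>i. (i, j) \<in> cells la \<and> T (i, j) \<noteq> i" using ij by blast
  define i0 where "i0 = (LEAST i. (i, j) \<in> cells la \<and> T (i, j) \<noteq> i)"
  have i0: "(i0, j) \<in> cells la" "T (i0, j) \<noteq> i0"
    using LeastI_ex[OF ex] unfolding i0_def by auto
  have below: "T (i, j) = i" if "i < i0" "(i, j) \<in> cells la" for i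
    using not_less_Least[of i "\<lambda>i. (i, j) \<in> cells la \<and> T (i, j) \<noteq> i"] that
    unfolding i0_def by blast
  define v where "v = T (i0, j)"
  have vgt: "i0 < v" using ssyt_row_index_le[OF T s i0(1)] i0(2) unfolding v_def by simp
  have "content_from la T j v > 0"
    unfolding content_from_def using i0(1) v_def by (subst card_gt_0_iff) (auto simp: finite_cells_subset)
  moreover have "content_from la T j (v - 1) = 0"
    using content_from_pred_first_jump_eq_0[OF T s right i0(1) _ below] vgt unfolding v_def by blast
  moreover have "content_from la T j v \<le> content_from la T j (v - 1)"
    using good vgt unfolding antimono_iff_le_Suc by (metis Suc_pred' gr0I less_nat_zero_code)
  ultimately show False by simp
qed

lemma ssyt_antimono_eq_row_tableau:
  assumes T: "T \<in> ssyt n la" and s: "sorted_wrt (\<ge>) la" and good: "\<And>j. antimono (content_from la T j)"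
  shows "T = row_tableau la"
proof -
  have "\<forall>i j'. (i, j') \<in> cells la \<longrightarrow> j \<le> j' \<longrightarrow> T (i, j') = i" for j
  proof (induction "width la - j" arbitrary: j)
    case 0
    then show ?case using cells_width[OF s] by fastforce
  next
    case (Suc w)
    then have "T (i, j') = i" if "(i, j') \<in> cells la" "Suc j \<le> j'" for i j'
      using that by (metis Suc_diff_Suc diff_Suc_1 le_SucE zero_less_Suc zero_less_diff)
    then show ?case
      using ssyt_antimono_column[OF T s good] by (metis le_eq_less_or_eq Suc_leI)
  qed
  then show ?thesis
    using ssytD(2)[OF T] by (auto simp: row_tableau_def fun_eq_iff)
qed

lemma sum_sign_reversing_involution:
  assumes "finite A" "\<And>x. x \<in> A \<Longrightarrow> f x \<in> A" "\<And>x. x \<in> A \<Longrightarrow> f (f x) = x"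
    "\<And>x. x \<in> A \<Longrightarrow> w (f x) = - (w x :: ipoly)"
  shows "(\<Sum>x\<in>A. w x) = 0"
proof -
  have "(\<Sum>x\<in>A. w x) = (\<Sum>x\<in>A. w (f x))"
    by (rule sum.reindex_bij_witness[where i = f and j = f]) (use assms in auto)
  also have "\<dots> = - (\<Sum>x\<in>A. w x)" using assms(4) by (simp add: sum_negf)
  finally show ?thesis by simp
qed

lemma sum_alternant_ssyt:
  assumes s: "sorted_wrt (\<ge>) la" and l: "length la \<le> n"
  shows "(\<Sum>T\<in>ssyt n la. alternant n (staircase n + tableau_content la T)) = alternant n (staircase n + part_vec la)"
proof -
  let ?f = "\<lambda>T. alternant n (staircase n + tableau_content la T)"
  let ?A = "{T \<in> ssyt n la. \<exists>j. \<not> antimono (content_from la T j)}"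
  have split: "ssyt n la = insert (row_tableau la) ?A"
  proof
    show "ssyt n la \<subseteq> insert (row_tableau la) ?A"
      using ssyt_antimono_eq_row_tableau[OF _ s] by blast
    show "insert (row_tableau la) ?A \<subseteq> ssyt n la" using row_tableau_ssyt[OF s l] by blast
  qed
  have notin: "row_tableau la \<notin> ?A" using antimono_content_from_row_tableau[OF s] by auto
  have finA: "finite ?A" using finite_ssyt by simp
  have "(\<Sum>T\<in>?A. ?f T) = 0"
  proof (rule sum_sign_reversing_involution[OF finA, where f = "bk_cancel la"])
    fix T assume "T \<in> ?A"
    then have T: "bad_tableau n la T" using s by (simp add: bad_tableau_def)
    show "bk_cancel la T \<in> ?A"
      using bad_tableau.bk_cancel_ssyt[OF T] bad_tableau.bk_cancel_bad[OF T] by auto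
    show "bk_cancel la (bk_cancel la T) = T" by (rule bad_tableau.bk_cancel_involution[OF T])
    show "?f (bk_cancel la T) = - ?f T" by (rule bad_tableau.alternant_bk_cancel[OF T])
  qed
  moreover have "(\<Sum>T\<in>ssyt n la. ?f T) = ?f (row_tableau la) + (\<Sum>T\<in>?A. ?f T)"
    using sum.insert[OF finA notin, of ?f] by (simp only: split[symmetric])
  ultimately show ?thesis using tableau_content_row_tableau by simp
qed

lemma alternant_staircase_mult_schur:
  assumes s: "sorted_wrt (\<ge>) la" and l: "length la \<le> n"
  shows "alternant n (staircase n) * schur n la = alternant n (staircase n + part_vec la)"
proof -
  let ?S = "ssyt n la" and ?c = "tableau_content la"
  have "alternant n (staircase n) * schur n la
      = (\<Sum>b\<in>keys (schur n la). of_int (lookup (schur n la) b) * alternant n (staircase n + b))"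
    by (rule alternant_mult_symmetric[OF symmetric_schur[OF s]])
  also have "\<dots> = (\<Sum>b\<in>?c ` ?S. of_nat (card {T \<in> ?S. ?c T = b}) * alternant n (staircase n + b))"
    unfolding keys_schur by (simp add: lookup_schur)
  also have "\<dots> = (\<Sum>b\<in>?c ` ?S. \<Sum>T\<in>{T \<in> ?S. ?c T = b}. alternant n (staircase n + ?c T))"
    by (intro sum.cong refl) (simp add: sum_constant)
  also have "\<dots> = (\<Sum>T\<in>?S. alternant n (staircase n + ?c T))"
    by (rule sum.image_gen[symmetric]) (rule finite_ssyt)
  also have "\<dots> = alternant n (staircase n + part_vec la)" by (rule sum_alternant_ssyt[OF s l])
  finally show ?thesis .
qed

section \<open>Schur expansions\<close>

definition schur_sum :: "nat \<Rightarrow> (nat list \<Rightarrow> int) \<Rightarrow> ipoly" where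
  "schur_sum n c = (\<Sum>la\<in>{la. c la \<noteq> 0}. of_int (c la) * schur n la)"

definition schur_coeff_fun :: "nat \<Rightarrow> (nat list \<Rightarrow> int) \<Rightarrow> bool" where
  "schur_coeff_fun n c \<longleftrightarrow> finite {la. c la \<noteq> 0} \<and> (\<forall>la. c la \<noteq> 0 \<longrightarrow> la \<in> partitions_le n)"

lemma lookup_alternant_mult_schur_sum:
  assumes ok: "schur_coeff_fun n c" and mu: "mu \<in> partitions_le n"
  shows "lookup (alternant n (staircase n) * schur_sum n c) (staircase n + part_vec mu) = c mu"
proof -
  let ?S = "{la. c la \<noteq> 0}"
  have fin: "finite ?S" using ok by (simp add: schur_coeff_fun_def)
  have P: "la \<in> partitions_le n" if "la \<in> ?S" for la using ok that by (simp add: schur_coeff_fun_def)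
  have "alternant n (staircase n) * schur_sum n c = (\<Sum>la\<in>?S. of_int (c la) * alternant n (staircase n + part_vec la))"
    unfolding schur_sum_def sum_distrib_left
    by (intro sum.cong refl) (simp add: mult.left_commute alternant_staircase_mult_schur[OF partitions_le_sorted[OF P] partitions_le_length[OF P]])
  then have "lookup (alternant n (staircase n) * schur_sum n c) (staircase n + part_vec mu)
      = (\<Sum>la\<in>?S. c la * lookup (alternant n (staircase n + part_vec la)) (staircase n + part_vec mu))"
    by (simp add: lookup_sum lookup_of_int_mult)
  also have "\<dots> = (\<Sum>la\<in>?S. if la = mu then c la else 0)"
  proof (intro sum.cong refl)
    fix la assume la: "la \<in> ?S"
    have "lookup (alternant n (staircase n + part_vec la)) (staircase n + part_vec mu) = (if staircase n + part_vec la = staircase n + part_vec mu then 1 else 0)"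
      by (rule lookup_alternant_strictly_decreasing[OF strictly_decreasing_staircase_part_vec[OF partitions_le_sorted[OF P[OF la]]] strictly_decreasing_staircase_part_vec[OF partitions_le_sorted[OF mu]]])
    moreover have "staircase n + part_vec la = staircase n + part_vec mu \<longleftrightarrow> la = mu"
      using part_vec_inj[OF partitions_le_partition[OF P[OF la]] partitions_le_partition[OF mu]] by auto
    ultimately show "c la * lookup (alternant n (staircase n + part_vec la)) (staircase n + part_vec mu) = (if la = mu then c la else 0)"
      by simp
  qed
  also have "\<dots> = c mu" using fin by (simp add: sum.delta)
  finally show ?thesis .
qed

lemma schur_sum_inj:
  assumes "schur_coeff_fun n c" "schur_coeff_fun n c'" "schur_sum n c = schur_sum n c'"
  shows "c = c'"
proof
  fix mu
  show "c mu = c' mu"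
  proof (cases "mu \<in> partitions_le n")
    case True
    then show ?thesis using lookup_alternant_mult_schur_sum[OF assms(1) True] lookup_alternant_mult_schur_sum[OF assms(2) True] assms(3) by simp
  next
    case False
    then have "c mu = 0" "c' mu = 0" using assms(1,2) unfolding schur_coeff_fun_def by blast+
    then show ?thesis by simp
  qed
qed

lemma schur_coeffs_schur_sum:
  assumes "schur_coeff_fun n c" "g = schur_sum n c"
  shows "schur_coeffs n g = c"
  unfolding schur_coeffs_def
proof (rule the_equality)
  show "finite {la. c la \<noteq> 0} \<and> (\<forall>la. c la \<noteq> 0 \<longrightarrow> la \<in> partitions_le n) \<and>
      g = (\<Sum>la\<in>{la. c la \<noteq> 0}. of_int (c la) * schur n la)"
    using assms by (simp add: schur_coeff_fun_def schur_sum_def)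
  fix c' assume "finite {la. c' la \<noteq> 0} \<and> (\<forall>la. c' la \<noteq> 0 \<longrightarrow> la \<in> partitions_le n) \<and>
      g = (\<Sum>la\<in>{la. c' la \<noteq> 0}. of_int (c' la) * schur n la)"
  then have "schur_coeff_fun n c'" "g = schur_sum n c'" by (simp_all add: schur_coeff_fun_def schur_sum_def)
  then show "c' = c" using schur_sum_inj[OF _ assms(1)] assms(2) by simp
qed

lemma schur_sum_superset:
  assumes "finite A" "{la. c la \<noteq> 0} \<subseteq> A"
  shows "schur_sum n c = (\<Sum>la\<in>A. of_int (c la) * schur n la)"
  unfolding schur_sum_def by (rule sum.mono_neutral_left) (use assms in auto)

definition collect_coeffs :: "'x set \<Rightarrow> ('x \<Rightarrow> int) \<Rightarrow> ('x \<Rightarrow> nat list) \<Rightarrow> nat list \<Rightarrow> int" where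
  "collect_coeffs X w h mu = (\<Sum>x\<in>{x \<in> X. h x = mu}. w x)"

lemma collect_coeffs_nonzero_in_image:
  assumes "collect_coeffs X w h mu \<noteq> 0"
  shows "mu \<in> h ` X"
proof (rule ccontr)
  assume "mu \<notin> h ` X"
  then have "{x \<in> X. h x = mu} = {}" by auto
  then have "collect_coeffs X w h mu = 0" unfolding collect_coeffs_def by (simp only: sum.empty)
  then show False using assms by contradiction
qed

lemma schur_coeff_fun_collect_coeffs:
  assumes "finite X" "\<And>x. x \<in> X \<Longrightarrow> h x \<in> partitions_le n"
  shows "schur_coeff_fun n (collect_coeffs X w h)"
proof -
  have "{mu. collect_coeffs X w h mu \<noteq> 0} \<subseteq> h ` X" using collect_coeffs_nonzero_in_image by blast
  then show ?thesis using assms unfolding schur_coeff_fun_def by (blast intro: finite_subset)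
qed

lemma sum_schur_eq_schur_sum_collect_coeffs:
  assumes "finite X"
  shows "(\<Sum>x\<in>X. of_int (w x) * schur n (h x)) = schur_sum n (collect_coeffs X w h)"
proof -
  have "(\<Sum>x\<in>X. of_int (w x) * schur n (h x))
      = (\<Sum>mu\<in>h ` X. \<Sum>x\<in>{x \<in> X. h x = mu}. of_int (w x) * schur n (h x))"
    by (rule sum.image_gen[OF assms])
  also have "\<dots> = (\<Sum>mu\<in>h ` X. of_int (collect_coeffs X w h mu) * schur n mu)"
    by (intro sum.cong refl) (simp add: collect_coeffs_def sum_distrib_right)
  also have "\<dots> = schur_sum n (collect_coeffs X w h)"
    using assms collect_coeffs_nonzero_in_image by (intro schur_sum_superset[symmetric]) blast+
  finally show ?thesis .
qed

lemma schur_sum_mult: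
  assumes c: "schur_coeff_fun n c" and A: "finite A" "{la. c la \<noteq> 0} \<subseteq> A"
    and d: "\<And>la. la \<in> A \<Longrightarrow> schur_coeff_fun n (d la) \<and> schur n la * q = schur_sum n (d la)"
  defines "D \<equiv> \<lambda>mu. \<Sum>la\<in>A. c la * d la mu"
  shows "schur_coeff_fun n D" and "schur_sum n c * q = schur_sum n D"
proof -
  define M where "M = (\<Union>la\<in>A. {mu. d la mu \<noteq> 0})"
  have M: "finite M" "M \<subseteq> partitions_le n"
    using A(1) d unfolding M_def schur_coeff_fun_def by auto
  have D_supp: "{mu. D mu \<noteq> 0} \<subseteq> M"
    unfolding D_def M_def by (fastforce dest: sum.not_neutral_contains_not_neutral)
  show "schur_coeff_fun n D"
    using D_supp M unfolding schur_coeff_fun_def by (blast intro: finite_subset)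
  have "schur_sum n c * q = (\<Sum>la\<in>A. of_int (c la) * (schur n la * q))"
    using schur_sum_superset[OF A] by (simp add: sum_distrib_right mult.assoc)
  also have "\<dots> = (\<Sum>la\<in>A. \<Sum>mu\<in>M. of_int (c la * d la mu) * schur n mu)"
  proof (intro sum.cong refl)
    fix la assume la: "la \<in> A"
    have "{mu. d la mu \<noteq> 0} \<subseteq> M" using la unfolding M_def by blast
    then show "of_int (c la) * (schur n la * q) = (\<Sum>mu\<in>M. of_int (c la * d la mu) * schur n mu)"
      using d[OF la] schur_sum_superset[OF M(1)]
      by (simp add: sum_distrib_left mult.assoc)
  qed
  also have "\<dots> = (\<Sum>mu\<in>M. of_int (D mu) * schur n mu)"
    by (subst sum.swap) (simp add: D_def of_int_sum sum_distrib_right)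
  also have "\<dots> = schur_sum n D"
    by (rule schur_sum_superset[OF M(1) D_supp, symmetric])
  finally show "schur_sum n c * q = schur_sum n D" .
qed

lemma schur_expansion_via_alternants:
  assumes f: "symmetric_poly n f"
    and p: "alternant n (staircase n) * p = alternant n (staircase n + v)"
    and exp: "\<And>b. b \<in> keys f \<Longrightarrow> mu b \<in> partitions_le n \<and>
      alternant n (staircase n + v + b) = of_int (e b) * alternant n (staircase n + part_vec (mu b))"
  shows "p * f = (\<Sum>b\<in>keys f. of_int (lookup f b * e b) * schur n (mu b))"
proof -
  have "alternant n (staircase n) * (p * f) = alternant n (staircase n + v) * f"
    using p by (simp flip: mult.assoc)
  also have "\<dots> = (\<Sum>b\<in>keys f. of_int (lookup f b) * alternant n (staircase n + v + b))"
    by (rule alternant_mult_symmetric[OF f])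
  also have "\<dots> = (\<Sum>b\<in>keys f. of_int (lookup f b * e b) * (alternant n (staircase n) * schur n (mu b)))"
  proof (intro sum.cong refl)
    fix b assume b: "b \<in> keys f"
    have mu: "mu b \<in> partitions_le n" using exp[OF b] by blast
    show "of_int (lookup f b) * alternant n (staircase n + v + b)
        = of_int (lookup f b * e b) * (alternant n (staircase n) * schur n (mu b))"
      using exp[OF b] alternant_staircase_mult_schur[OF partitions_le_sorted[OF mu] partitions_le_length[OF mu]]
      by simp
  qed
  also have "\<dots> = alternant n (staircase n) * (\<Sum>b\<in>keys f. of_int (lookup f b * e b) * schur n (mu b))"
    by (simp add: sum_distrib_left mult.left_commute)
  finally show ?thesis by (rule alternant_staircase_mult_cancel)
qed

lemma symmetric_poly_schur_sum:
  assumes g: "symmetric_poly n g"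
  shows "\<exists>c. schur_coeff_fun n c \<and> g = schur_sum n c"
proof -
  have "\<forall>b\<in>keys g. \<exists>e mu. mu \<in> partitions_le n \<and>
      alternant n (staircase n + 0 + b) = of_int e * alternant n (staircase n + part_vec mu)"
    using g unfolding symmetric_poly_def by (simp add: alternant_staircase_plus_keys)
  then obtain e mu where emu: "\<forall>b\<in>keys g. mu b \<in> partitions_le n \<and>
      alternant n (staircase n + 0 + b) = of_int (e b) * alternant n (staircase n + part_vec (mu b))"
    by metis
  let ?w = "\<lambda>b. lookup g b * e b"
  have "1 * g = (\<Sum>b\<in>keys g. of_int (?w b) * schur n (mu b))"
    using emu by (intro schur_expansion_via_alternants[OF g, where v = 0]) auto
  then have "g = schur_sum n (collect_coeffs (keys g) ?w mu)"
    by (simp only: mult_1 sum_schur_eq_schur_sum_collect_coeffs[OF finite_keys])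
  moreover have "schur_coeff_fun n (collect_coeffs (keys g) ?w mu)"
    using emu by (intro schur_coeff_fun_collect_coeffs) auto
  ultimately show ?thesis by blast
qed

section \<open>Pieri's rule for s(1^r)\<close>

lemma sorted_replicate_1: "sorted_wrt (\<ge>) (replicate r (1::nat))"
  by (induction r) auto

lemma lookup_keys_schur_column_le_1:
  assumes "b \<in> keys (schur n (replicate r 1))"
  shows "lookup b i \<le> 1"
proof -
  let ?la = "replicate r (1::nat)"
  obtain T where T: "T \<in> ssyt n ?la" "b = tableau_content ?la T" using assms keys_schur by blast
  have "{c \<in> cells ?la. T c = i} = {c \<in> cells ?la. snd c = 0 \<and> T c = i}"
    by (auto simp: cells_iff)
  then have "entry_count ?la T i = column_content ?la T 0 i"
    by (simp add: entry_count_def column_content_def)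
  then show ?thesis
    using column_content_le_1[OF T(1) sorted_replicate_1] T(2) by (simp add: lookup_tableau_content)
qed

definition rows_grow_at_most_one :: "nat list \<Rightarrow> nat list \<Rightarrow> bool" where
  "rows_grow_at_most_one la mu \<longleftrightarrow> (\<forall>i<length la. i < length mu \<and> mu ! i \<le> la ! i + 1)"

lemma rows_grow_at_most_one_refl: "rows_grow_at_most_one la la"
  by (simp add: rows_grow_at_most_one_def)

lemma rows_grow_at_most_one_part_vec:
  assumes "partition la" "part_vec mu = part_vec la + b" "\<And>i. lookup b i \<le> 1"
  shows "rows_grow_at_most_one la mu"
  unfolding rows_grow_at_most_one_def
proof (intro allI impI)
  fix i assume i: "i < length la"
  have eq: "lookup (part_vec mu) i = la ! i + lookup b i"
    using assms(2) i by (simp add: lookup_add lookup_part_vec)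
  then have "i < length mu"
    using partition_nth_pos[OF assms(1) i] by (auto simp: lookup_part_vec split: if_splits)
  then show "i < length mu \<and> mu ! i \<le> la ! i + 1"
    using eq assms(3)[of i] by (simp add: lookup_part_vec)
qed

lemma alternant_part_vec_plus_column_key:
  assumes la: "la \<in> partitions_le n" and keys: "keys b \<subseteq> {..<n}" and le1: "\<And>i. lookup b i \<le> 1"
  shows "\<exists>e mu. mu \<in> partitions_le n \<and> rows_grow_at_most_one la mu \<and>
    alternant n (staircase n + part_vec la + b) = of_int e * alternant n (staircase n + part_vec mu)"
proof -
  let ?g = "staircase n + part_vec la + b"
  have pv: "lookup (part_vec la) (Suc i) \<le> lookup (part_vec la) i" for i
    using sorted_wrt_nth_less[OF partitions_le_sorted[OF la], of i "Suc i"] by (auto simp: lookup_part_vec)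
  have mono: "lookup ?g (Suc i) \<le> lookup ?g i" if "Suc i < n" for i
    using pv[of i] le1[of "Suc i"] that by (simp add: lookup_add lookup_staircase)
  show ?thesis
  proof (cases "\<exists>i. Suc i < n \<and> lookup ?g i = lookup ?g (Suc i)")
    case True
    then obtain i where "Suc i < n" "lookup ?g i = lookup ?g (Suc i)" by blast
    then have "alternant n ?g = 0" by (intro alternant_repeated_eq_0[of i n "Suc i"]) auto
    then show ?thesis using la rows_grow_at_most_one_refl by (intro exI[of _ 0] exI[of _ la]) simp
  next
    case False
    have "\<exists>mu \<in> partitions_le n. part_vec mu = part_vec la + b"
    proof (rule part_vec_exists)
      fix i assume i: "Suc i < n"
      then have "lookup ?g (Suc i) < lookup ?g i" using mono False by (metis le_neq_implies_less)
      then show "lookup (part_vec la + b) (Suc i) \<le> lookup (part_vec la + b) i"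
        using i by (simp add: lookup_add lookup_staircase)
    next
      fix i assume "n \<le> i"
      then show "lookup (part_vec la + b) i = 0"
        using partitions_le_length[OF la] keys by (auto simp: lookup_add lookup_part_vec in_keys_iff)
    qed
    then obtain mu where mu: "mu \<in> partitions_le n" "part_vec mu = part_vec la + b" by blast
    then have "rows_grow_at_most_one la mu"
      using rows_grow_at_most_one_part_vec partitions_le_partition[OF la] le1 by blast
    then show ?thesis using mu by (intro exI[of _ 1] exI[of _ mu]) (simp add: add.assoc)
  qed
qed

lemma schur_mult_schur_column:
  assumes la: "la \<in> partitions_le n"
  shows "\<exists>d. schur_coeff_fun n d \<and> schur n la * schur n (replicate r 1) = schur_sum n d \<and>
    (\<forall>mu. d mu \<noteq> 0 \<longrightarrow> rows_grow_at_most_one la mu)"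
proof -
  let ?E = "schur n (replicate r 1)"
  have "\<forall>b\<in>keys ?E. \<exists>e mu. mu \<in> partitions_le n \<and> rows_grow_at_most_one la mu \<and>
      alternant n (staircase n + part_vec la + b) = of_int e * alternant n (staircase n + part_vec mu)"
  proof
    fix b assume b: "b \<in> keys ?E"
    show "\<exists>e mu. mu \<in> partitions_le n \<and> rows_grow_at_most_one la mu \<and>
      alternant n (staircase n + part_vec la + b) = of_int e * alternant n (staircase n + part_vec mu)"
      by (rule alternant_part_vec_plus_column_key[OF la keys_schur_subset[OF b]
            lookup_keys_schur_column_le_1[OF b]])
  qed
  then obtain e mu where emu: "\<forall>b\<in>keys ?E. mu b \<in> partitions_le n \<and> rows_grow_at_most_one la (mu b) \<and>
      alternant n (staircase n + part_vec la + b) = of_int (e b) * alternant n (staircase n + part_vec (mu b))"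
    by metis
  let ?w = "\<lambda>b. lookup ?E b * e b"
  let ?d = "collect_coeffs (keys ?E) ?w mu"
  have "schur n la * ?E = (\<Sum>b\<in>keys ?E. of_int (?w b) * schur n (mu b))"
    using emu alternant_staircase_mult_schur[OF partitions_le_sorted[OF la] partitions_le_length[OF la]]
    by (intro schur_expansion_via_alternants[OF symmetric_schur[OF sorted_replicate_1]]) auto
  then have "schur n la * ?E = schur_sum n ?d"
    by (simp only: sum_schur_eq_schur_sum_collect_coeffs[OF finite_keys])
  moreover have "schur_coeff_fun n ?d"
    using emu by (intro schur_coeff_fun_collect_coeffs) auto
  moreover have "rows_grow_at_most_one la nu" if "?d nu \<noteq> 0" for nu
    using collect_coeffs_nonzero_in_image[OF that] emu by blast
  ultimately show ?thesis by blast
qed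

lemma C_op_schur_sum:
  assumes "schur_coeff_fun n c"
  shows "C_op n m (schur_sum n c) = schur_sum n (\<lambda>la. if adapted m la then c la else 0)"
proof -
  have "schur_coeffs n (schur_sum n c) = c" by (rule schur_coeffs_schur_sum[OF assms refl])
  then show ?thesis unfolding C_op_def schur_sum_def by (intro sum.cong) auto
qed

lemma adapted_if_Suc_adapted_rows_grow:
  assumes "adapted (m + 1) mu" "rows_grow_at_most_one la mu"
  shows "adapted m la"
  unfolding adapted_def
proof (intro allI impI)
  fix i assume i: "i < length la"
  then have "i < length mu" "mu ! i \<le> la ! i + 1"
    using assms(2) by (auto simp: rows_grow_at_most_one_def)
  moreover have "int (mu ! i) > int (m + 1) - int (i + 1)"
    using assms(1) \<open>i < length mu\<close> by (simp add: adapted_def)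
  ultimately show "int (la ! i) > int m - int (i + 1)" by linarith
qed

lemma C_op_Suc_schur_sum_mult:
  assumes c: "schur_coeff_fun n c"
    and d: "\<And>la. c la \<noteq> 0 \<Longrightarrow> schur_coeff_fun n (d la) \<and> schur n la * q = schur_sum n (d la) \<and>
      (\<forall>mu. d la mu \<noteq> 0 \<longrightarrow> rows_grow_at_most_one la mu)"
  shows "C_op n (m + 1) (schur_sum n c * q) = C_op n (m + 1) (C_op n m (schur_sum n c) * q)"
proof -
  let ?A = "{la. c la \<noteq> 0}"
  have A: "finite ?A" using c by (simp add: schur_coeff_fun_def)
  define cm where "cm = (\<lambda>la. if adapted m la then c la else 0)"
  have cm: "schur_coeff_fun n cm" "{la. cm la \<noteq> 0} \<subseteq> ?A"
    using c by (auto simp: schur_coeff_fun_def cm_def intro: finite_subset)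
  define D where "D mu = (\<Sum>la\<in>?A. c la * d la mu)" for mu
  define Dm where "Dm mu = (\<Sum>la\<in>?A. cm la * d la mu)" for mu
  have D: "schur_coeff_fun n D" "schur_sum n c * q = schur_sum n D"
    using schur_sum_mult[OF c A order.refl, of d q] d unfolding D_def by auto
  have Dm: "schur_coeff_fun n Dm" "C_op n m (schur_sum n c) * q = schur_sum n Dm"
    using schur_sum_mult[OF cm(1) A cm(2), of d q] d C_op_schur_sum[OF c] unfolding Dm_def cm_def by auto
  have "D mu = Dm mu" if mu: "adapted (m + 1) mu" for mu
  proof -
    have "c la * d la mu = cm la * d la mu" if "la \<in> ?A" for la
      using d that adapted_if_Suc_adapted_rows_grow[OF mu] by (auto simp: cm_def)
    then show ?thesis unfolding D_def Dm_def by (rule sum.cong[OF refl])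
  qed
  then show ?thesis
    unfolding D(2) Dm(2) C_op_schur_sum[OF D(1)] C_op_schur_sum[OF Dm(1)] by metis
qed

theorem lemma5p3:
  fixes n m r :: nat and g :: ipoly
  assumes "symmetric_poly n g" and "r \<le> n"
  shows "C_op n (m + 1) (g * schur n (replicate r 1))
       = C_op n (m + 1) (C_op n m g * schur n (replicate r 1))"
proof -
  obtain c where c: "schur_coeff_fun n c" "g = schur_sum n c"
    using symmetric_poly_schur_sum[OF assms(1)] by blast
  have "\<forall>la. \<exists>d. c la \<noteq> 0 \<longrightarrow> schur_coeff_fun n d \<and>
      schur n la * schur n (replicate r 1) = schur_sum n d \<and> (\<forall>mu. d mu \<noteq> 0 \<longrightarrow> rows_grow_at_most_one la mu)"
    using c(1) schur_mult_schur_column by (auto simp: schur_coeff_fun_def)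
  then obtain d where "\<And>la. c la \<noteq> 0 \<Longrightarrow> schur_coeff_fun n (d la) \<and>
      schur n la * schur n (replicate r 1) = schur_sum n (d la) \<and> (\<forall>mu. d la mu \<noteq> 0 \<longrightarrow> rows_grow_at_most_one la mu)"
    by metis
  then show ?thesis unfolding c(2) by (rule C_op_Suc_schur_sum_mult[OF c(1)])
qed

end
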